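(* Let $\mu$ be a localized measure on a $\mathrm{CAT}(\kappa)$ space $M$ with Fréchet mean $\bar\mu$, and let $\hat\mu=(\log_{\bar\mu})_\sharp\mu$. Then the apex $0$ of $T_{\bar\mu}M$ is the Fréchet mean of $\hat\mu$ on $(T_{\bar\mu}M,d_{\bar\mu})$.
   Context: Let $(M,d)$ be a $\mathrm{CAT}(\kappa)$ space. For geodesics $\gamma_1,\gamma_2$ issuing from $p$ parametrized by arclength, $\cos\angle(\gamma_1,\gamma_2)=\lim_{s,t\to0}\frac{s^2+t^2-d(\gamma_1(s),\gamma_2(t))^2}{2st}$, $\angle\in[0,\pi]$; classes of geodesics at angle $0$ form the space of directions $S_pM$. The tangent cone $T_pM=S_pM\times[0,\infty)/(S_pM\times\{0\})$ has apex $0$, length $\|(V,t)\|=t$, inner product $\langle V,W\rangle_p=\|V\|\|W\|\cos\angle(V,W)$ and conical metric $d_p(V,W)=\sqrt{\|V\|^2+\|W\|^2-2\langle V,W\rangle_p}$ (a $\mathrm{CAT}(0)$ cone). For $v$ joined to $p$ by a unique unit-speed shortest path $\gamma_v$, $\log_p v=d(p,v)\gamma_v'(0)$. For a Borel probability measure $\mu$ on $M$ with finite Fréchet function $F(p)=F_\mu(p)=\frac12\int_M d(p,x)^2\mu(dx)$, a Fréchet mean is a minimizer of $F$. $\mu$ is localized if its Fréchet mean $\bar\mu$ is unique, $F$ is convex on a neighborhood of $\bar\mu$, and $\log_{\bar\mu}$ is uniquely defined $\mu$-a.s.; then $\hat\mu=(\log_{\bar\mu})_\sharp\mu$ is a measure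 on $T_{\bar\mu}M$. *)

theory Defs
  imports "HOL-Analysis.Analysis" "HOL-Probability.Probability"
begin

definition model_space :: "real \<Rightarrow> (real^3) set" where
  "model_space \<kappa> =
     (if \<kappa> = 0 then {x. x $ 3 = 0}
      else if \<kappa> > 0 then {x. norm x = 1 / sqrt \<kappa>}
      else {x. (x $ 1)^2 + (x $ 2)^2 - (x $ 3)^2 = 1 / \<kappa> \<and> x $ 3 > 0})"

definition model_dist :: "real \<Rightarrow> real^3 \<Rightarrow> real^3 \<Rightarrow> real" where
  "model_dist \<kappa> x y =
     (if \<kappa> = 0 then dist x y
      else if \<kappa> > 0 then arccos (\<kappa> * (x \<bullet> y)) / sqrt \<kappa>
      else arcosh (\<kappa> * ((x $ 1) * (y $ 1) + (x $ 2) * (y $ 2) - (x $ 3) * (y $ 3))) / sqrt (- \<kappa>))"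

text \<open>r < D_kappa, where D_kappa = pi / sqrt kappa for kappa > 0 and D_kappa = infinity otherwise.\<close>
definition below_D :: "real \<Rightarrow> real \<Rightarrow> bool" where
  "below_D \<kappa> r \<longleftrightarrow> \<kappa> \<le> 0 \<or> r < pi / sqrt \<kappa>"

definition geodesic_path :: "real \<Rightarrow> (real \<Rightarrow> 'a::metric_space) \<Rightarrow> bool" where
  "geodesic_path L \<gamma> \<longleftrightarrow> L \<ge> 0 \<and> (\<forall>s\<in>{0..L}. \<forall>t\<in>{0..L}. dist (\<gamma> s) (\<gamma> t) = \<bar>s - t\<bar>)"

definition geodesic_seg :: "'a::metric_space \<Rightarrow> 'a \<Rightarrow> (real \<Rightarrow> 'a) \<Rightarrow> bool" where
  "geodesic_seg u v \<gamma> \<longleftrightarrow> geodesic_path (dist u v) \<gamma> \<and> \<gamma> 0 = u \<and> \<gamma> (dist u v) = v"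

text \<open>CAT(kappa) in the sense of Bridson--Haefliger: D_kappa-geodesic, and every geodesic
triangle of perimeter < 2 D_kappa satisfies the CAT(kappa) inequality: for all points x, y on
the sides and their comparison points in a comparison triangle in M_kappa^2,
d(x,y) <= d(x',y').\<close>
definition CAT :: "real \<Rightarrow> 'a::metric_space itself \<Rightarrow> bool" where
  "CAT \<kappa> (_::'a itself) \<longleftrightarrow>
     (\<forall>x y::'a. below_D \<kappa> (dist x y) \<longrightarrow> (\<exists>\<gamma>. geodesic_seg x y \<gamma>)) \<and>
     (\<forall>(p::'a) q r \<gamma>1 \<gamma>2 \<gamma>3 p' q' r'.
        geodesic_seg p q \<gamma>1 \<and> geodesic_seg q r \<gamma>2 \<and> geodesic_seg r p \<gamma>3 \<and>
        below_D \<kappa> ((dist p q + dist q r + dist r p) / 2) \<and>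
        p' \<in> model_space \<kappa> \<and> q' \<in> model_space \<kappa> \<and> r' \<in> model_space \<kappa> \<and>
        model_dist \<kappa> p' q' = dist p q \<and> model_dist \<kappa> q' r' = dist q r \<and>
        model_dist \<kappa> r' p' = dist r p \<longrightarrow>
        (\<forall>(u, v, \<gamma>, u', v') \<in> {(p, q, \<gamma>1, p', q'), (q, r, \<gamma>2, q', r'), (r, p, \<gamma>3, r', p')}.
         \<forall>(w, z, \<eta>, w', z') \<in> {(p, q, \<gamma>1, p', q'), (q, r, \<gamma>2, q', r'), (r, p, \<gamma>3, r', p')}.
         \<forall>s\<in>{0..dist u v}. \<forall>t\<in>{0..dist w z}. \<forall>x' \<in> model_space \<kappa>. \<forall>y' \<in> model_space \<kappa>.
           model_dist \<kappa> u' x' = s \<and> model_dist \<kappa> x' v' = dist u v - s \<and>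
           model_dist \<kappa> w' y' = t \<and> model_dist \<kappa> y' z' = dist w z - t \<longrightarrow>
           dist (\<gamma> s) (\<eta> t) \<le> model_dist \<kappa> x' y'))"

definition geodesics_from :: "'a::metric_space \<Rightarrow> (real \<Rightarrow> 'a) set" where
  "geodesics_from p = {\<gamma>. \<exists>l>0. geodesic_path l \<gamma> \<and> \<gamma> 0 = p}"

definition cos_angle :: "(real \<Rightarrow> 'a::metric_space) \<Rightarrow> (real \<Rightarrow> 'a) \<Rightarrow> real" where
  "cos_angle \<gamma> \<eta> = Lim (at (0, 0) within ({0<..} \<times> {0<..}))
      (\<lambda>(s, t). (s^2 + t^2 - (dist (\<gamma> s) (\<eta> t))^2) / (2 * s * t))"

definition angle :: "(real \<Rightarrow> 'a::metric_space) \<Rightarrow> (real \<Rightarrow> 'a) \<Rightarrow> real" where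
  "angle \<gamma> \<eta> = arccos (cos_angle \<gamma> \<eta>)"

text \<open>Tangent cone T_p M: elements are represented by pairs (gamma, t) of a geodesic gamma
issuing from p (a representative of its direction) and a length t >= 0; all pairs with t = 0
represent the apex. The conical (pseudo)metric identifies representatives of the same point.\<close>
definition tangent_cone :: "'a::metric_space \<Rightarrow> ((real \<Rightarrow> 'a) \<times> real) set" where
  "tangent_cone p = {(\<gamma>, t). t = 0 \<or> (0 < t \<and> \<gamma> \<in> geodesics_from p)}"

definition apex :: "'a::metric_space \<Rightarrow> (real \<Rightarrow> 'a) \<times> real" where
  "apex p = (\<lambda>_. p, 0)"

definition tnorm :: "(real \<Rightarrow> 'a::metric_space) \<times> real \<Rightarrow> real" where
  "tnorm V = snd V"

definition tinner :: "(real \<Rightarrow> 'a::metric_space) \<times> real \<Rightarrow> (real \<Rightarrow> 'a) \<times> real \<Rightarrow> real" where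
  "tinner V W = tnorm V * tnorm W * cos (angle (fst V) (fst W))"

definition tdist :: "(real \<Rightarrow> 'a::metric_space) \<times> real \<Rightarrow> (real \<Rightarrow> 'a) \<times> real \<Rightarrow> real" where
  "tdist V W = sqrt ((tnorm V)^2 + (tnorm W)^2 - 2 * tinner V W)"

definition unique_shortest :: "'a::metric_space \<Rightarrow> 'a \<Rightarrow> bool" where
  "unique_shortest p v \<longleftrightarrow>
     (\<exists>\<gamma>. geodesic_seg p v \<gamma> \<and> (\<forall>\<eta>. geodesic_seg p v \<eta> \<longrightarrow> (\<forall>s\<in>{0..dist p v}. \<eta> s = \<gamma> s)))"

text \<open>log_p v = d(p,v) gamma_v'(0), i.e. the point of T_p M with direction [gamma_v] and length d(p,v).\<close>
definition logm :: "'a::metric_space \<Rightarrow> 'a \<Rightarrow> (real \<Rightarrow> 'a) \<times> real" where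
  "logm p v = (SOME \<gamma>. geodesic_seg p v \<gamma>, dist p v)"

definition finite_frechet :: "'a::metric_space measure \<Rightarrow> bool" where
  "finite_frechet \<mu> \<longleftrightarrow> (\<forall>p. integrable \<mu> (\<lambda>x. (dist p x)^2))"

definition frechet :: "'a::metric_space measure \<Rightarrow> 'a \<Rightarrow> real" where
  "frechet \<mu> p = (\<integral>x. (dist p x)^2 \<partial>\<mu>) / 2"

definition frechet_mean :: "'a::metric_space measure \<Rightarrow> 'a \<Rightarrow> bool" where
  "frechet_mean \<mu> m \<longleftrightarrow> (\<forall>q. frechet \<mu> m \<le> frechet \<mu> q)"

definition geod_convex_on :: "'a::metric_space set \<Rightarrow> ('a \<Rightarrow> real) \<Rightarrow> bool" where
  "geod_convex_on U F \<longleftrightarrow>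
     (\<forall>L \<gamma>. geodesic_path L \<gamma> \<and> \<gamma> ` {0..L} \<subseteq> U \<longrightarrow> convex_on {0..L} (F \<circ> \<gamma>))"

definition localized :: "'a::metric_space measure \<Rightarrow> 'a \<Rightarrow> bool" where
  "localized \<mu> m \<longleftrightarrow>
     finite_frechet \<mu> \<and> frechet_mean \<mu> m \<and> (\<forall>q. frechet_mean \<mu> q \<longrightarrow> q = m) \<and>
     (\<exists>U. open U \<and> m \<in> U \<and> geod_convex_on U (frechet \<mu>)) \<and>
     (AE x in \<mu>. unique_shortest m x)"

text \<open>Frechet function of the push-forward measure (log_m)_# mu on (T_m M, d_m):
  F(V) = 1/2 \<integral> d_m(V,W)^2 d((log_m)_# mu)(W) = 1/2 \<integral> d_m(V, log_m x)^2 d mu(x).\<close>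
definition tangent_frechet :: "'a::metric_space measure \<Rightarrow> 'a \<Rightarrow> (real \<Rightarrow> 'a) \<times> real \<Rightarrow> ennreal" where
  "tangent_frechet \<mu> m V = (\<integral>\<^sup>+ x. ennreal ((tdist V (logm m x))^2 / 2) \<partial>\<mu>)"

text \<open>V is THE Frechet mean of (log_m)_# mu in T_m M: the Frechet function is finite, V minimises
it, and every minimiser coincides with V as a point of T_m M (distance 0).\<close>
definition tangent_frechet_mean :: "'a::metric_space measure \<Rightarrow> 'a \<Rightarrow> (real \<Rightarrow> 'a) \<times> real \<Rightarrow> bool" where
  "tangent_frechet_mean \<mu> m V \<longleftrightarrow>
     V \<in> tangent_cone m \<and>
     (\<forall>W\<in>tangent_cone m. tangent_frechet \<mu> m W < \<infinity>) \<and>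
     (\<forall>W\<in>tangent_cone m. tangent_frechet \<mu> m V \<le> tangent_frechet \<mu> m W) \<and>
     (\<forall>W\<in>tangent_cone m. tangent_frechet \<mu> m W \<le> tangent_frechet \<mu> m V \<longrightarrow> tdist W V = 0)"

end

theory Submission
  imports Defs
begin

text \<open>By the conical law of cosines, the Frechet function \<open>F\<^sub>T\<close> of \<open>(log\<^sub>m)\<^sub>\<sharp>\<mu>\<close> at the
  point \<open>(\<gamma>, t)\<close> of the tangent cone is \<open>F(m) + t\<^sup>2/2 - t \<integral> d(m, x) cos \<angle>(\<gamma>, \<gamma>\<^sub>x) d\<mu>\<close>,
  where \<open>\<gamma>\<^sub>x\<close> is the geodesic from \<open>m\<close> to \<open>x\<close>. In a CAT(\<open>\<kappa>\<close>) space the angle exists: the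
  CAT(\<open>\<kappa>\<close>) inequality makes the comparison angles at \<open>m\<close> monotone in both arguments, and the
  comparison cosine differs from the Euclidean quotient \<open>(s\<^sup>2 + t\<^sup>2 - d(\<gamma> s, \<eta> t)\<^sup>2) / (2 s t)\<close>
  by \<open>O((s + t)\<^sup>2)\<close>. This yields the first variation inequality
  \<open>d(\<gamma> s, x) \<le> d(m, x) - s cos \<angle>(\<gamma>, \<gamma>\<^sub>x) + o(s)\<close>. Since \<open>m\<close> minimises \<open>F\<close>, Fatou's lemma
  applied to the difference quotients of \<open>F\<close> along \<open>\<gamma>\<close> gives \<open>\<integral> d(m, x) cos \<angle>(\<gamma>, \<gamma>\<^sub>x) d\<mu> \<le> 0\<close>.
  Hence \<open>F\<^sub>T(\<gamma>, t) \<ge> F\<^sub>T(0) + t\<^sup>2/2\<close>, so the apex is the unique minimiser.\<close>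

section \<open>Elementary estimates\<close>

lemma cos_ge_one_minus_half_sq:
  fixes x :: real assumes "0 \<le> x" shows "1 - x^2/2 \<le> cos x"
proof -
  let ?f = "\<lambda>x::real. cos x - 1 + x^2/2"
  have "?f 0 \<le> ?f x"
  proof (rule DERIV_nonneg_imp_nondecreasing[OF assms])
    fix y :: real assume "0 \<le> y" "y \<le> x"
    show "\<exists>d. DERIV ?f y :> d \<and> d \<ge> 0"
      using sin_x_le_x[OF \<open>0 \<le> y\<close>]
      by (intro exI[of _ "- sin y + y"] conjI) (auto intro!: derivative_eq_intros)
  qed
  then show ?thesis by simp
qed

lemma sin_ge_cubic:
  fixes x :: real assumes "0 \<le> x" shows "x - x^3/6 \<le> sin x"
proof -
  let ?f = "\<lambda>x::real. sin x - x + x^3/6"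
  have "?f 0 \<le> ?f x"
  proof (rule DERIV_nonneg_imp_nondecreasing[OF assms])
    fix y :: real assume "0 \<le> y" "y \<le> x"
    show "\<exists>d. DERIV ?f y :> d \<and> d \<ge> 0"
      using cos_ge_one_minus_half_sq[OF \<open>0 \<le> y\<close>]
      by (intro exI[of _ "cos y - 1 + y^2/2"] conjI)
        (auto intro!: derivative_eq_intros simp: power2_eq_square power3_eq_cube)
  qed
  then show ?thesis by simp
qed

lemma sinh_ge_self:
  fixes x :: real assumes "0 \<le> x" shows "x \<le> sinh x"
proof -
  let ?f = "\<lambda>x::real. sinh x - x"
  have "?f 0 \<le> ?f x"
  proof (rule DERIV_nonneg_imp_nondecreasing[OF assms])
    fix y :: real assume "0 \<le> y" "y \<le> x"
    show "\<exists>d. DERIV ?f y :> d \<and> d \<ge> 0"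
      using cosh_real_ge_1[of y]
      by (intro exI[of _ "cosh y - 1"] conjI) (auto intro!: derivative_eq_intros)
  qed
  then show ?thesis by simp
qed

lemma sinh_le_mult_cosh:
  fixes x :: real assumes "0 \<le> x" shows "sinh x \<le> x * cosh x"
proof -
  let ?f = "\<lambda>x::real. x * cosh x - sinh x"
  have "?f 0 \<le> ?f x"
  proof (rule DERIV_nonneg_imp_nondecreasing[OF assms])
    fix y :: real assume "0 \<le> y" "y \<le> x"
    show "\<exists>d. DERIV ?f y :> d \<and> d \<ge> 0"
      using sinh_ge_self[OF \<open>0 \<le> y\<close>] \<open>0 \<le> y\<close>
      by (intro exI[of _ "y * sinh y"] conjI) (auto intro!: derivative_eq_intros)
  qed
  then show ?thesis by simp
qed

lemma cosh_minus_one_le_mult_sinh: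
  fixes x :: real assumes "0 \<le> x" shows "cosh x - 1 \<le> x * sinh x"
proof -
  let ?f = "\<lambda>x::real. x * sinh x - cosh x + 1"
  have "?f 0 \<le> ?f x"
  proof (rule DERIV_nonneg_imp_nondecreasing[OF assms])
    fix y :: real assume "0 \<le> y" "y \<le> x"
    show "\<exists>d. DERIV ?f y :> d \<and> d \<ge> 0"
      using cosh_real_ge_1[of y] \<open>0 \<le> y\<close>
      by (intro exI[of _ "y * cosh y"] conjI) (auto intro!: derivative_eq_intros)
  qed
  then show ?thesis by simp
qed

lemma sinh_le_cubic:
  fixes x :: real assumes "0 \<le> x" "x \<le> 1" shows "sinh x \<le> x + cosh 1 * x^3"
proof -
  have "sinh x - x \<le> x * (cosh x - 1)"
    using sinh_le_mult_cosh[OF assms(1)] by (simp add: algebra_simps)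
  also have "\<dots> \<le> x * (x * sinh x)"
    using cosh_minus_one_le_mult_sinh[OF assms(1)] assms(1) by (simp add: mult_left_mono)
  also have "\<dots> \<le> x * (x * (x * cosh x))"
    using sinh_le_mult_cosh[OF assms(1)] assms(1) by (simp add: mult_left_mono)
  also have "\<dots> \<le> x * (x * (x * cosh 1))"
    using assms cosh_real_nonneg_le_iff[of x 1] by (simp add: mult_left_mono)
  finally show ?thesis by (simp add: power3_eq_cube algebra_simps)
qed

lemma cosh_abs_real [simp]: "cosh \<bar>x :: real\<bar> = cosh x"
  by (cases "0 \<le> x") (simp_all add: abs_if)

lemma abs_le_by_derivative_bound:
  fixes \<psi> \<psi>' :: "real \<Rightarrow> real"
  assumes "a \<le> b" "\<psi> a = 0" "\<And>x. (\<psi> has_real_derivative \<psi>' x) (at x)"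
    "\<And>z. a \<le> z \<Longrightarrow> z \<le> b \<Longrightarrow> \<bar>\<psi>' z\<bar> \<le> M"
  shows "\<bar>\<psi> b\<bar> \<le> (b - a) * M"
proof (cases "a = b")
  case True
  then show ?thesis using assms by simp
next
  case False
  then have "a < b" using assms by simp
  from MVT2[OF this, of \<psi> \<psi>'] assms(3)
  obtain z where z: "a < z" "z < b" "\<psi> b - \<psi> a = (b - a) * \<psi>' z" by blast
  have "\<bar>\<psi> b\<bar> = (b - a) * \<bar>\<psi>' z\<bar>" using z assms(2) \<open>a < b\<close> by (simp add: abs_mult)
  also have "\<dots> \<le> (b - a) * M" using assms(4)[of z] z \<open>a < b\<close> by (intro mult_left_mono) auto
  finally show ?thesis .
qed

lemma triangle_defect_mult_le:
  fixes u v \<alpha> :: real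
  assumes "0 < u" "0 < v" "\<alpha> \<le> u + v"
  shows "(\<alpha> - \<bar>u - v\<bar>) * (u + v) \<le> 4 * u * v"
proof -
  have "(\<alpha> - \<bar>u - v\<bar>) * (u + v) \<le> (u + v - \<bar>u - v\<bar>) * (u + v)"
    using assms by (intro mult_right_mono) auto
  also have "\<dots> \<le> 4 * u * v"
    using assms by (cases "u \<le> v")
      (auto simp: algebra_simps power2_eq_square intro: mult_left_mono mult_right_mono)
  finally show ?thesis .
qed

lemma mult_div_sin_mult_sin_bounds:
  fixes u v :: real
  assumes u: "0 < u" "u \<le> 1/2" and v: "0 < v" "v \<le> 1/2"
  defines "P \<equiv> u * v / (sin u * sin v)"
  shows "1 \<le> P" "P - 1 \<le> (u + v)^2"
proof -
  have su: "0 < sin u" "0 < sin v" using u v pi_gt3 by (auto intro!: sin_gt_zero)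
  show P1: "1 \<le> P" using sin_x_le_x[of u] sin_x_le_x[of v] u v su
    unfolding P_def by (simp add: mult_mono)
  have pos: "0 < u * (u * (u * (v * (v * v))))" using u v by simp
  have "u * v * (1 - (u^2 + v^2)/6) \<le> (u - u^3/6) * (v - v^3/6)"
    using u v by (simp add: algebra_simps power2_eq_square power3_eq_cube)
      (use pos in \<open>simp add: add_divide_distrib\<close>)
  also have "\<dots> \<le> sin u * sin v"
  proof -
    have "v * v \<le> 6" using v mult_mono[of v 1 v 1] by simp
    then show ?thesis using sin_ge_cubic[of u] sin_ge_cubic[of v] u v su
      by (intro mult_mono) (auto simp: power3_eq_cube)
  qed
  finally have h: "u * v * (1 - (u^2 + v^2)/6) \<le> sin u * sin v" .
  define W where "W = (u^2 + v^2)/6"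
  have W: "0 \<le> W" "W \<le> 1/12"
    using mult_mono[of u "1/2" u "1/2"] mult_mono[of v "1/2" v "1/2"] u v
    unfolding W_def by (auto simp: power2_eq_square)
  have "P \<le> 1/(1 - W)"
    unfolding P_def W_def using h u v W su by (simp add: W_def divide_simps)
  also have "\<dots> \<le> 1 + 2 * W"
  proof -
    have "(1 + 2 * W) * (1 - W) = 1 + W * (1 - 2 * W)" by (simp add: algebra_simps)
    moreover have "0 \<le> W * (1 - 2 * W)" using W by simp
    ultimately show ?thesis using W by (simp add: divide_simps)
  qed
  finally have "P \<le> 1 + 2 * W" .
  moreover have "2 * W \<le> (u + v)^2"
    using mult_pos_pos[OF u(1) v(1)] unfolding W_def by (simp add: power2_eq_square algebra_simps)
  ultimately show "P - 1 \<le> (u + v)^2" by linarith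
qed

lemma mult_div_sinh_mult_sinh_bounds:
  fixes u v :: real
  assumes u: "0 < u" "u \<le> 1/2" and v: "0 < v" "v \<le> 1/2"
  defines "Q \<equiv> u * v / (sinh u * sinh v)"
  shows "0 < Q" "Q \<le> 1" "1 - Q \<le> (cosh 1 + (cosh 1)^2) * (u + v)^2"
proof -
  define c where "c = cosh (1::real)"
  have c1: "1 \<le> c" unfolding c_def by (rule cosh_real_ge_1)
  have su: "u \<le> sinh u" "v \<le> sinh v" using sinh_ge_self u v by auto
  have su2: "sinh u \<le> u * (1 + c * u^2)" "sinh v \<le> v * (1 + c * v^2)"
    using sinh_le_cubic[of u] sinh_le_cubic[of v] u v unfolding c_def
    by (auto simp: power2_eq_square power3_eq_cube algebra_simps)
  have sp: "0 < sinh u * sinh v" using su u v by (simp add: mult_pos_pos)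
  have uvle: "u * v \<le> sinh u * sinh v" using su u v by (intro mult_mono) auto
  show "Q \<le> 1" "0 < Q" unfolding Q_def using uvle sp u v by (auto simp: divide_simps)
  have "1 - Q = (sinh u * sinh v - u * v)/(sinh u * sinh v)"
    unfolding Q_def using sp u v by (simp add: divide_simps)
  also have "\<dots> \<le> (sinh u * sinh v - u * v)/(u * v)"
    using uvle u v by (intro divide_left_mono) (auto simp: mult_pos_pos)
  also have "\<dots> \<le> (u * (1 + c * u^2) * (v * (1 + c * v^2)) - u * v)/(u * v)"
    using su2 u v su c1 by (intro divide_right_mono diff_right_mono mult_mono) auto
  also have "\<dots> = c * u^2 + c * v^2 + c^2 * (u^2 * v^2)"
    using u v by (simp add: field_simps power2_eq_square)
  also have "\<dots> \<le> c * (u + v)^2 + c^2 * (u + v)^2"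
  proof -
    have "c * u^2 + c * v^2 \<le> c * (u + v)^2" using c1 mult_pos_pos[OF u(1) v(1)]
      by (simp add: power2_eq_square algebra_simps)
    moreover have "u^2 * v^2 \<le> (u + v)^2"
    proof -
      have "v * v \<le> 1" using mult_mono[of v 1 v 1] v by simp
      then have "u^2 * v^2 \<le> u^2 * 1" by (intro mult_left_mono) (auto simp: power2_eq_square)
      also have "\<dots> \<le> (u + v)^2" using u v by (simp add: power2_eq_square algebra_simps)
      finally show ?thesis .
    qed
    then have "c^2 * (u^2 * v^2) \<le> c^2 * (u + v)^2" by (intro mult_left_mono) auto
    ultimately show ?thesis by linarith
  qed
  finally show "1 - Q \<le> (cosh 1 + (cosh 1)^2) * (u + v)^2"
    unfolding c_def by (simp add: algebra_simps)
qed

section \<open>Comparison triangles in the model spaces\<close>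

text \<open>In both model geometries the comparison cosine is compared with the Euclidean one by
  writing their difference as \<open>\<psi> \<alpha> / (2 u v)\<close> with \<open>\<psi> \<bar>u - v\<bar> = 0\<close> and bounding \<open>\<psi>'\<close> on
  \<open>[\<bar>u - v\<bar>, u + v]\<close>.\<close>

lemma spherical_comparison_cos_approx:
  fixes u v \<alpha> :: real
  assumes u: "0 < u" "u \<le> 1/2" and v: "0 < v" "v \<le> 1/2"
    and a: "\<bar>u - v\<bar> \<le> \<alpha>" "\<alpha> \<le> u + v"
  shows "\<bar>(u^2 + v^2 - \<alpha>^2)/(2 * u * v) - (cos \<alpha> - cos u * cos v)/(sin u * sin v)\<bar>
           \<le> 4 * (u + v)^2"
proof -
  have su: "0 < sin u" "0 < sin v" using u v pi_gt3 by (auto intro!: sin_gt_zero)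
  define P where "P = u * v / (sin u * sin v)"
  have P: "1 \<le> P" "P - 1 \<le> (u + v)^2"
    using mult_div_sin_mult_sin_bounds[OF u v] unfolding P_def by auto
  define \<psi> where "\<psi> = (\<lambda>\<beta>. \<beta>^2 - (u - v)^2 - 2 * P * (cos (u - v) - cos \<beta>))"
  define \<psi>' where "\<psi>' = (\<lambda>\<beta>::real. 2 * \<beta> - 2 * P * sin \<beta>)"
  have d: "\<And>x. (\<psi> has_real_derivative \<psi>' x) (at x)"
    unfolding \<psi>_def \<psi>'_def by (auto intro!: derivative_eq_intros)
  have \<psi>0: "\<psi> \<bar>u - v\<bar> = 0" unfolding \<psi>_def by simp
  have bd: "\<bar>\<psi>' z\<bar> \<le> 2 * (u + v)^3" if "\<bar>u - v\<bar> \<le> z" "z \<le> u + v" for z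
  proof -
    have z0: "0 \<le> z" using that by linarith
    have "0 \<le> sin z" using z0 that u v pi_gt3 by (intro sin_ge_zero) auto
    then have "1 * sin z \<le> P * sin z" using P(1) by (rule mult_right_mono[rotated])
    then have up: "z - P * sin z \<le> z^3/6" using sin_ge_cubic[OF z0] by simp
    have "z^3 \<le> (u + v)^3" using that z0 by (intro power_mono) auto
    moreover have "0 \<le> (u + v)^3" using u v by simp
    ultimately have up': "z^3/6 \<le> (u + v)^3" by linarith
    have "P * sin z \<le> P * z" using sin_x_le_x[OF z0] P(1) by (intro mult_left_mono) auto
    then have lo: "-((P - 1) * z) \<le> z - P * sin z" by (simp add: algebra_simps)
    have "(P - 1) * z \<le> (u + v)^2 * (u + v)" using P z0 that by (intro mult_mono) auto
    then have "(P - 1) * z \<le> (u + v)^3" by (simp add: power3_eq_cube power2_eq_square)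
    then show ?thesis unfolding \<psi>'_def abs_le_iff using up up' lo by linarith
  qed
  have "\<bar>\<psi> \<alpha>\<bar> \<le> (\<alpha> - \<bar>u - v\<bar>) * (2 * (u + v)^3)"
    by (rule abs_le_by_derivative_bound[OF a(1) \<psi>0 d]) (use bd a in auto)
  also have "\<dots> = ((\<alpha> - \<bar>u - v\<bar>) * (u + v)) * (2 * (u + v)^2)"
    by (simp add: power2_eq_square power3_eq_cube)
  also have "\<dots> \<le> (4 * u * v) * (2 * (u + v)^2)"
    using triangle_defect_mult_le[OF u(1) v(1) a(2)] by (intro mult_right_mono) auto
  finally have b: "\<bar>\<psi> \<alpha>\<bar> \<le> 8 * u * v * (u + v)^2" by simp
  have eq: "(u^2 + v^2 - \<alpha>^2)/(2 * u * v) - (cos \<alpha> - cos u * cos v)/(sin u * sin v)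
      = - \<psi> \<alpha> / (2 * u * v)"
    unfolding \<psi>_def P_def using u v su
    by (simp add: cos_diff divide_simps power2_eq_square) (simp add: algebra_simps)
  show ?thesis unfolding eq using b u v
    by (simp add: abs_div divide_le_eq abs_minus_cancel) (simp add: algebra_simps)
qed

lemma hyperbolic_comparison_cos_approx:
  fixes u v \<alpha> :: real
  assumes u: "0 < u" "u \<le> 1/2" and v: "0 < v" "v \<le> 1/2"
    and a: "\<bar>u - v\<bar> \<le> \<alpha>" "\<alpha> \<le> u + v"
  shows "\<bar>(u^2 + v^2 - \<alpha>^2)/(2 * u * v) - (cosh u * cosh v - cosh \<alpha>)/(sinh u * sinh v)\<bar>
          \<le> 4 * (cosh 1 + (cosh 1)^2) * (u + v)^2"
proof -
  define K where "K = cosh (1::real) + (cosh 1)^2"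
  have c1: "1 \<le> cosh (1::real)" by (rule cosh_real_ge_1)
  then have K: "cosh 1 \<le> K" "0 \<le> K" unfolding K_def by auto
  define Q where "Q = u * v / (sinh u * sinh v)"
  have Q: "0 < Q" "Q \<le> 1" "1 - Q \<le> K * (u + v)^2"
    using mult_div_sinh_mult_sinh_bounds[OF u v] unfolding Q_def K_def by auto
  define \<psi> where "\<psi> = (\<lambda>\<beta>. \<beta>^2 - (u - v)^2 - 2 * Q * (cosh \<beta> - cosh (u - v)))"
  define \<psi>' where "\<psi>' = (\<lambda>\<beta>::real. 2 * \<beta> - 2 * Q * sinh \<beta>)"
  have d: "\<And>x. (\<psi> has_real_derivative \<psi>' x) (at x)"
    unfolding \<psi>_def \<psi>'_def by (auto intro!: derivative_eq_intros)
  have \<psi>0: "\<psi> \<bar>u - v\<bar> = 0" unfolding \<psi>_def by simp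
  have bd: "\<bar>\<psi>' z\<bar> \<le> 2 * (K * (u + v)^3)" if "\<bar>u - v\<bar> \<le> z" "z \<le> u + v" for z
  proof -
    have z0: "0 \<le> z" and z1: "z \<le> 1" using that u v by linarith+
    have "Q * z \<le> Q * sinh z" using sinh_ge_self[OF z0] Q by (intro mult_left_mono) auto
    then have "z - Q * sinh z \<le> (1 - Q) * z" by (simp add: algebra_simps)
    moreover have "(1 - Q) * z \<le> (K * (u + v)^2) * (u + v)"
      using Q z0 that by (intro mult_mono) auto
    ultimately have up: "z - Q * sinh z \<le> K * (u + v)^3"
      by (simp add: power2_eq_square power3_eq_cube)
    have "Q * sinh z \<le> 1 * sinh z" using Q sinh_ge_self[OF z0] z0 by (intro mult_right_mono) auto
    moreover have "sinh z \<le> z + cosh 1 * z^3" using sinh_le_cubic[OF z0 z1] .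
    moreover have "cosh 1 * z^3 \<le> K * (u + v)^3"
      using K z0 that c1 by (intro mult_mono power_mono) auto
    ultimately have lo: "- (K * (u + v)^3) \<le> z - Q * sinh z" by linarith
    show ?thesis unfolding \<psi>'_def using up lo by (simp add: abs_le_iff)
  qed
  have "\<bar>\<psi> \<alpha>\<bar> \<le> (\<alpha> - \<bar>u - v\<bar>) * (2 * (K * (u + v)^3))"
    by (rule abs_le_by_derivative_bound[OF a(1) \<psi>0 d]) (use bd a in auto)
  also have "\<dots> = ((\<alpha> - \<bar>u - v\<bar>) * (u + v)) * (2 * K * (u + v)^2)"
    by (simp add: power2_eq_square power3_eq_cube)
  also have "\<dots> \<le> (4 * u * v) * (2 * K * (u + v)^2)"
    using triangle_defect_mult_le[OF u(1) v(1) a(2)] K by (intro mult_right_mono) auto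
  finally have b: "\<bar>\<psi> \<alpha>\<bar> \<le> 8 * u * v * (K * (u + v)^2)" by simp
  have eq: "(u^2 + v^2 - \<alpha>^2)/(2 * u * v) - (cosh u * cosh v - cosh \<alpha>)/(sinh u * sinh v)
      = - \<psi> \<alpha> / (2 * u * v)"
    unfolding \<psi>_def Q_def using u v
    by (simp add: cosh_diff divide_simps power2_eq_square) (simp add: algebra_simps)
  have "\<bar>- \<psi> \<alpha> / (2 * u * v)\<bar> \<le> 4 * K * (u + v)^2" using b u v
    by (simp add: abs_div divide_le_eq abs_minus_cancel) (simp add: algebra_simps)
  then show ?thesis unfolding eq K_def by simp
qed

lemma spherical_comparison_cos:
  fixes u v \<alpha> :: real
  assumes u: "0 < u" "u \<le> 1/2" and v: "0 < v" "v \<le> 1/2" and a: "\<bar>u - v\<bar> \<le> \<alpha>" "\<alpha> \<le> u + v"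
  defines "C \<equiv> (cos \<alpha> - cos u * cos v)/(sin u * sin v)"
  shows "-1 \<le> C \<and> C \<le> 1 \<and> arccos (cos u * cos v + sin u * sin v * C) = \<alpha>"
proof -
  have su: "sin u > 0" using u pi_gt3 by (intro sin_gt_zero) auto
  have sv: "sin v > 0" using v pi_gt3 by (intro sin_gt_zero) auto
  have sp: "sin u * sin v > 0" using su sv by simp
  have pi: "u + v \<le> pi" using u v pi_gt3 by linarith
  have "cos \<alpha> \<le> cos \<bar>u - v\<bar>" using a pi by (intro cos_monotone_0_pi_le) auto
  then have c1: "cos \<alpha> - cos u * cos v \<le> sin u * sin v" by (simp add: cos_diff)
  have "cos (u + v) \<le> cos \<alpha>" using a pi by (intro cos_monotone_0_pi_le) auto
  then have c2: "- (sin u * sin v) \<le> cos \<alpha> - cos u * cos v" by (simp add: cos_add)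
  have "C \<le> 1" unfolding C_def using c1 sp by (simp add: divide_simps)
  moreover have "-1 \<le> C" unfolding C_def using c2 sp by (simp add: divide_simps)
  moreover have "cos u * cos v + sin u * sin v * C = cos \<alpha>" unfolding C_def using su sv by simp
  moreover have "arccos (cos \<alpha>) = \<alpha>" using a pi by (intro arccos_cos) auto
  ultimately show ?thesis by simp
qed

lemma spherical_comparison_cos_ge:
  fixes u v \<beta> c :: real
  assumes u: "0 < u" "u \<le> 1/2" and v: "0 < v" "v \<le> 1/2" and c: "-1 \<le> c" "c \<le> 1"
    and b: "0 \<le> \<beta>" "\<beta> \<le> arccos (cos u * cos v + sin u * sin v * c)"
  shows "c \<le> (cos \<beta> - cos u * cos v)/(sin u * sin v)"
proof -
  have su: "sin u > 0" using u pi_gt3 by (intro sin_gt_zero) auto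
  have sv: "sin v > 0" using v pi_gt3 by (intro sin_gt_zero) auto
  have sp: "sin u * sin v > 0" using su sv by simp
  define X where "X = cos u * cos v + sin u * sin v * c"
  have "sin u * sin v * c \<le> sin u * sin v" using c sp by (simp add: mult_left_le)
  then have "X \<le> cos (u - v)" unfolding X_def by (simp add: cos_diff)
  then have X1: "X \<le> 1" using cos_le_one[of "u - v"] by linarith
  have "- (sin u * sin v) \<le> sin u * sin v * c"
    using mult_left_mono[OF c(1), of "sin u * sin v"] sp by simp
  then have "cos (u + v) \<le> X" unfolding X_def by (simp add: cos_add)
  then have X2: "-1 \<le> X" using cos_ge_minus_one[of "u + v"] by linarith
  have "cos (arccos X) \<le> cos \<beta>" using b arccos_ubound[OF X2 X1] unfolding X_def[symmetric]
    by (intro cos_monotone_0_pi_le) auto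
  then have "X \<le> cos \<beta>" using cos_arccos[OF X2 X1] by simp
  then show ?thesis unfolding X_def using sp by (simp add: divide_simps mult.commute)
qed

lemma hyperbolic_comparison_cos:
  fixes u v \<alpha> :: real
  assumes u: "0 < u" and v: "0 < v" and a: "\<bar>u - v\<bar> \<le> \<alpha>" "\<alpha> \<le> u + v"
  defines "C \<equiv> (cosh u * cosh v - cosh \<alpha>)/(sinh u * sinh v)"
  shows "-1 \<le> C \<and> C \<le> 1 \<and> arcosh (cosh u * cosh v - sinh u * sinh v * C) = \<alpha>"
proof -
  have sp: "sinh u * sinh v > 0" using u v by simp
  have "cosh \<bar>u - v\<bar> \<le> cosh \<alpha>" using a by (subst cosh_real_nonneg_le_iff) auto
  then have c1: "cosh u * cosh v - cosh \<alpha> \<le> sinh u * sinh v" by (simp add: cosh_diff)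
  have "cosh \<alpha> \<le> cosh (u + v)" using a u v by (subst cosh_real_nonneg_le_iff) auto
  then have c2: "- (sinh u * sinh v) \<le> cosh u * cosh v - cosh \<alpha>" by (simp add: cosh_add)
  have "C \<le> 1" unfolding C_def using c1 sp by (simp add: divide_simps)
  moreover have "-1 \<le> C" unfolding C_def using c2 sp by (simp add: divide_simps)
  moreover have "cosh u * cosh v - sinh u * sinh v * C = cosh \<alpha>" unfolding C_def using u v by simp
  moreover have "arcosh (cosh \<alpha>) = \<alpha>" using a by (intro arcosh_cosh_real) auto
  ultimately show ?thesis by simp
qed

lemma hyperbolic_comparison_cos_ge:
  fixes u v \<beta> c :: real
  assumes u: "0 < u" and v: "0 < v" and c: "-1 \<le> c" "c \<le> 1"
    and b: "0 \<le> \<beta>" "\<beta> \<le> arcosh (cosh u * cosh v - sinh u * sinh v * c)"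
  shows "c \<le> (cosh u * cosh v - cosh \<beta>)/(sinh u * sinh v)"
proof -
  have sp: "sinh u * sinh v > 0" using u v by simp
  define X where "X = cosh u * cosh v - sinh u * sinh v * c"
  have "sinh u * sinh v * c \<le> sinh u * sinh v" using c sp by (simp add: mult_left_le)
  then have "cosh (u - v) \<le> X" unfolding X_def by (simp add: cosh_diff)
  then have X1: "1 \<le> X" using cosh_real_ge_1[of "u - v"] by linarith
  have "cosh \<beta> \<le> cosh (arcosh X)" using b X1 unfolding X_def[symmetric]
    by (subst cosh_real_nonneg_le_iff) auto
  then have "cosh \<beta> \<le> X" using X1 by simp
  then show ?thesis unfolding X_def using sp by (simp add: divide_simps mult.commute)
qed

lemma euclidean_comparison_cos:
  fixes s t a :: real
  assumes s: "0 < s" and t: "0 < t" and a: "\<bar>s - t\<bar> \<le> a" "a \<le> s + t"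
  defines "C \<equiv> (s^2 + t^2 - a^2)/(2 * s * t)"
  shows "-1 \<le> C \<and> C \<le> 1 \<and> sqrt (s^2 + t^2 - 2 * s * t * C) = a"
proof -
  have a0: "0 \<le> a" using a by linarith
  have "\<bar>s - t\<bar>^2 \<le> a^2" using a by (intro power_mono) auto
  then have c1: "s^2 + t^2 - a^2 \<le> 2 * s * t" by (simp add: power2_eq_square algebra_simps)
  have "a^2 \<le> (s+t)^2" using a a0 by (intro power_mono) auto
  then have c2: "- (2 * s * t) \<le> s^2 + t^2 - a^2" by (simp add: power2_eq_square algebra_simps)
  have sp: "0 < 2 * s * t" using s t by simp
  have "C \<le> 1" unfolding C_def using c1 sp by (simp add: divide_simps)
  moreover have "-1 \<le> C" unfolding C_def using c2 sp by (simp add: divide_simps)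
  moreover have "s^2 + t^2 - 2 * s * t * C = a^2" unfolding C_def using s t by simp
  ultimately show ?thesis using a0 by simp
qed

lemma euclidean_comparison_cos_ge:
  fixes s t b c :: real
  assumes s: "0 < s" and t: "0 < t" and c: "-1 \<le> c" "c \<le> 1"
    and b: "0 \<le> b" "b \<le> sqrt (s^2 + t^2 - 2 * s * t * c)"
  shows "c \<le> (s^2 + t^2 - b^2)/(2 * s * t)"
proof -
  have sp: "0 < 2 * s * t" using s t by simp
  have "2 * s * t * c \<le> 2 * s * t" using c sp by (simp add: mult_left_le)
  moreover have "2 * s * t \<le> s^2 + t^2"
    using zero_le_power2[of "s - t"] unfolding power2_diff by linarith
  ultimately have R: "0 \<le> s^2 + t^2 - 2 * s * t * c" by linarith
  have "b^2 \<le> (sqrt (s^2 + t^2 - 2 * s * t * c))^2" using b by (intro power_mono) auto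
  then have "b^2 \<le> s^2 + t^2 - 2 * s * t * c" using R by simp
  then have "c * (2 * s * t) \<le> s^2 + t^2 - b^2" by (simp add: algebra_simps)
  then show ?thesis using pos_le_divide_eq[OF sp] by simp
qed

text \<open>\<open>model_side \<kappa> \<sigma>\<^sub>1 \<sigma>\<^sub>2 c\<close> is the third side, by the law of cosines of \<open>M\<^sub>\<kappa>\<^sup>2\<close>, of a
  triangle with sides \<open>\<sigma>\<^sub>1, \<sigma>\<^sub>2\<close> enclosing an angle of cosine \<open>c\<close>; \<open>model_point \<kappa> \<sigma> c s\<close> is the
  point of \<open>M\<^sub>\<kappa>\<^sup>2\<close> with polar coordinates \<open>(\<sigma>, (c, s))\<close> about its pole.\<close>

definition model_side :: "real \<Rightarrow> real \<Rightarrow> real \<Rightarrow> real \<Rightarrow> real" where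
  "model_side \<kappa> \<sigma>1 \<sigma>2 c =
    (if \<kappa> = 0 then sqrt (\<sigma>1^2 + \<sigma>2^2 - 2 * \<sigma>1 * \<sigma>2 * c)
     else if \<kappa> > 0 then
       arccos (cos (sqrt \<kappa> * \<sigma>1) * cos (sqrt \<kappa> * \<sigma>2)
         + sin (sqrt \<kappa> * \<sigma>1) * sin (sqrt \<kappa> * \<sigma>2) * c) / sqrt \<kappa>
     else
       arcosh (cosh (sqrt (-\<kappa>) * \<sigma>1) * cosh (sqrt (-\<kappa>) * \<sigma>2)
         - sinh (sqrt (-\<kappa>) * \<sigma>1) * sinh (sqrt (-\<kappa>) * \<sigma>2) * c) / sqrt (-\<kappa>))"

definition model_point :: "real \<Rightarrow> real \<Rightarrow> real \<Rightarrow> real \<Rightarrow> real^3" where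
  "model_point \<kappa> \<sigma> c s =
    (if \<kappa> = 0 then vector [\<sigma> * c, \<sigma> * s, 0]
     else if \<kappa> > 0 then
       vector [sin (sqrt \<kappa> * \<sigma>) * c / sqrt \<kappa>, sin (sqrt \<kappa> * \<sigma>) * s / sqrt \<kappa>,
         cos (sqrt \<kappa> * \<sigma>) / sqrt \<kappa>]
     else
       vector [sinh (sqrt (-\<kappa>) * \<sigma>) * c / sqrt (-\<kappa>), sinh (sqrt (-\<kappa>) * \<sigma>) * s / sqrt (-\<kappa>),
         cosh (sqrt (-\<kappa>) * \<sigma>) / sqrt (-\<kappa>)])"

lemma inner_vec3: "(x::real^3) \<bullet> y = x$1 * y$1 + x$2 * y$2 + x$3 * y$3"
  by (simp add: inner_vec_def sum_3)

lemma model_point_mem: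
  assumes "c^2 + s^2 = 1"
  shows "model_point \<kappa> \<sigma> c s \<in> model_space \<kappa>"
proof -
  consider "\<kappa> = 0" | "\<kappa> > 0" | "\<kappa> < 0" by linarith
  then show ?thesis
  proof cases
    case 1
    then show ?thesis by (simp add: model_point_def model_space_def)
  next
    case 2
    let ?k = "sqrt \<kappa>"
    have k: "?k > 0" "?k^2 = \<kappa>" using 2 by auto
    have "model_point \<kappa> \<sigma> c s \<bullet> model_point \<kappa> \<sigma> c s
        = ((sin (?k * \<sigma>))^2 * (c^2 + s^2) + (cos (?k * \<sigma>))^2) / ?k^2"
      using 2 by (simp add: model_point_def inner_vec3 power2_eq_square field_simps)
    also have "\<dots> = 1/\<kappa>" using assms k by (simp add: sin_squared_eq)
    finally have "norm (model_point \<kappa> \<sigma> c s) = sqrt (1/\<kappa>)" by (simp add: norm_eq_sqrt_inner)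
    then show ?thesis using 2 by (simp add: model_space_def real_sqrt_divide)
  next
    case 3
    let ?k = "sqrt (-\<kappa>)" and ?x = "model_point \<kappa> \<sigma> c s"
    have k: "?k > 0" "?k^2 = -\<kappa>" using 3 by auto
    have "(?x $ 1)^2 + (?x $ 2)^2 - (?x $ 3)^2
        = ((sinh (?k * \<sigma>))^2 * (c^2 + s^2) - (cosh (?k * \<sigma>))^2) / ?k^2"
      using 3 by (simp add: model_point_def power2_eq_square field_simps)
    also have "\<dots> = 1/\<kappa>" using assms k by (simp add: sinh_square_eq)
    finally show ?thesis using 3 k by (simp add: model_space_def model_point_def)
  qed
qed

lemma model_dist_model_point:
  assumes "c1^2 + s1^2 = 1" "c2^2 + s2^2 = 1"
  shows "model_dist \<kappa> (model_point \<kappa> \<sigma>1 c1 s1) (model_point \<kappa> \<sigma>2 c2 s2)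
    = model_side \<kappa> \<sigma>1 \<sigma>2 (c1 * c2 + s1 * s2)"
proof -
  let ?x = "model_point \<kappa> \<sigma>1 c1 s1" and ?y = "model_point \<kappa> \<sigma>2 c2 s2"
  consider "\<kappa> = 0" | "\<kappa> > 0" | "\<kappa> < 0" by linarith
  then show ?thesis
  proof cases
    case 1
    have "dist ?x ?y = sqrt ((\<sigma>1 * c1 - \<sigma>2 * c2)^2 + (\<sigma>1 * s1 - \<sigma>2 * s2)^2)"
      using 1
      by (simp add: model_point_def dist_norm norm_eq_sqrt_inner inner_vec3 power2_eq_square)
    also have "(\<sigma>1 * c1 - \<sigma>2 * c2)^2 + (\<sigma>1 * s1 - \<sigma>2 * s2)^2
        = \<sigma>1^2 * (c1^2 + s1^2) + \<sigma>2^2 * (c2^2 + s2^2) - 2 * \<sigma>1 * \<sigma>2 * (c1 * c2 + s1 * s2)"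
      by (simp add: power2_eq_square algebra_simps)
    finally show ?thesis using 1 assms by (simp add: model_dist_def model_side_def)
  next
    case 2
    let ?k = "sqrt \<kappa>"
    have k: "?k > 0" "?k^2 = \<kappa>" using 2 by auto
    have "\<kappa> * (?x \<bullet> ?y) = cos (?k * \<sigma>1) * cos (?k * \<sigma>2)
        + sin (?k * \<sigma>1) * sin (?k * \<sigma>2) * (c1 * c2 + s1 * s2)"
      using 2 k by (simp add: model_point_def inner_vec3 field_simps power2_eq_square)
    then show ?thesis using 2 by (simp add: model_dist_def model_side_def)
  next
    case 3
    let ?k = "sqrt (-\<kappa>)"
    have k: "?k > 0" "\<kappa> = -(?k^2)" using 3 by auto
    have "\<kappa> * (?x $ 1 * ?y $ 1 + ?x $ 2 * ?y $ 2 - ?x $ 3 * ?y $ 3)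
        = cosh (?k * \<sigma>1) * cosh (?k * \<sigma>2) - sinh (?k * \<sigma>1) * sinh (?k * \<sigma>2) * (c1 * c2 + s1 * s2)"
      using 3 k by (simp add: model_point_def field_simps power2_eq_square)
    then show ?thesis using 3 by (simp add: model_dist_def model_side_def)
  qed
qed

text \<open>The cosine of the comparison angle opposite to the side \<open>a\<close> of a triangle in \<open>M\<^sub>\<kappa>\<^sup>2\<close>
  with the other sides \<open>s\<close> and \<open>t\<close>; it inverts \<open>model_side \<kappa> s t\<close>.\<close>

definition comparison_cos :: "real \<Rightarrow> real \<Rightarrow> real \<Rightarrow> real \<Rightarrow> real" where
  "comparison_cos \<kappa> a s t =
    (if \<kappa> = 0 then (s^2 + t^2 - a^2) / (2 * s * t)
     else if \<kappa> > 0 then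
       (cos (sqrt \<kappa> * a) - cos (sqrt \<kappa> * s) * cos (sqrt \<kappa> * t))
         / (sin (sqrt \<kappa> * s) * sin (sqrt \<kappa> * t))
     else
       (cosh (sqrt (-\<kappa>) * s) * cosh (sqrt (-\<kappa>) * t) - cosh (sqrt (-\<kappa>) * a))
         / (sinh (sqrt (-\<kappa>) * s) * sinh (sqrt (-\<kappa>) * t)))"

lemma cos_quotient_scale:
  fixes k s t a :: real assumes "k \<noteq> 0"
  shows "((k * s)^2 + (k * t)^2 - (k * a)^2) / (2 * (k * s) * (k * t))
    = (s^2 + t^2 - a^2) / (2 * s * t)"
proof -
  have "((k * s)^2 + (k * t)^2 - (k * a)^2) = (k * k) * (s^2 + t^2 - a^2)"
    by (simp add: power2_eq_square algebra_simps)
  moreover have "2 * (k * s) * (k * t) = (k * k) * (2 * s * t)" by (simp add: algebra_simps)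
  moreover have "k * k \<noteq> 0" using assms by simp
  ultimately show ?thesis by simp
qed

lemma model_side_one:
  assumes "0 \<le> \<sigma>1" "0 \<le> \<sigma>2" "sqrt \<bar>\<kappa>\<bar> * \<sigma>1 \<le> 1/2" "sqrt \<bar>\<kappa>\<bar> * \<sigma>2 \<le> 1/2"
  shows "model_side \<kappa> \<sigma>1 \<sigma>2 1 = \<bar>\<sigma>1 - \<sigma>2\<bar>"
proof -
  consider "\<kappa> = 0" | "\<kappa> > 0" | "\<kappa> < 0" by linarith
  then show ?thesis
  proof cases
    case 1
    have "\<sigma>1^2 + \<sigma>2^2 - 2 * \<sigma>1 * \<sigma>2 * 1 = (\<sigma>1 - \<sigma>2)^2" by (simp add: power2_diff)
    then show ?thesis using 1 by (simp add: model_side_def)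
  next
    case 2
    let ?k = "sqrt \<kappa>"
    have k: "?k > 0" "sqrt \<bar>\<kappa>\<bar> = ?k" using 2 by auto
    have "0 \<le> ?k * \<sigma>1" "0 \<le> ?k * \<sigma>2" "?k * \<sigma>1 \<le> 1/2" "?k * \<sigma>2 \<le> 1/2"
      using assms k by auto
    then have "\<bar>?k * \<sigma>1 - ?k * \<sigma>2\<bar> \<le> pi" using pi_gt3 unfolding abs_le_iff by linarith
    then have "arccos (cos \<bar>?k * \<sigma>1 - ?k * \<sigma>2\<bar>) = \<bar>?k * \<sigma>1 - ?k * \<sigma>2\<bar>"
      by (intro arccos_cos) auto
    moreover have "model_side \<kappa> \<sigma>1 \<sigma>2 1 = arccos (cos \<bar>?k * \<sigma>1 - ?k * \<sigma>2\<bar>) / ?k"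
      using 2 by (simp add: model_side_def cos_diff)
    ultimately show ?thesis using k by (simp add: abs_mult flip: right_diff_distrib)
  next
    case 3
    let ?k = "sqrt (-\<kappa>)"
    have "arcosh (cosh \<bar>?k * \<sigma>1 - ?k * \<sigma>2\<bar>) = \<bar>?k * \<sigma>1 - ?k * \<sigma>2\<bar>"
      by (intro arcosh_cosh_real) auto
    moreover have "model_side \<kappa> \<sigma>1 \<sigma>2 1 = arcosh (cosh \<bar>?k * \<sigma>1 - ?k * \<sigma>2\<bar>) / ?k"
      using 3 by (simp add: model_side_def cosh_diff)
    ultimately show ?thesis using 3 by (simp add: abs_mult flip: right_diff_distrib)
  qed
qed

lemma model_side_zero:
  assumes "0 \<le> \<sigma>" "sqrt \<bar>\<kappa>\<bar> * \<sigma> \<le> 1/2"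
  shows "model_side \<kappa> 0 \<sigma> c = \<sigma>" "model_side \<kappa> \<sigma> 0 c = \<sigma>"
proof -
  have "model_side \<kappa> 0 \<sigma> c = model_side \<kappa> 0 \<sigma> 1" "model_side \<kappa> \<sigma> 0 c = model_side \<kappa> \<sigma> 0 1"
    by (simp_all add: model_side_def)
  then show "model_side \<kappa> 0 \<sigma> c = \<sigma>" "model_side \<kappa> \<sigma> 0 c = \<sigma>"
    using model_side_one[of 0 \<sigma> \<kappa>] model_side_one[of \<sigma> 0 \<kappa>] assms by auto
qed

lemma triangle_bounds_scale:
  fixes k s t a :: real
  assumes "0 < k" "\<bar>s - t\<bar> \<le> a" "a \<le> s + t"
  shows "\<bar>k * s - k * t\<bar> \<le> k * a" "k * a \<le> k * s + k * t"
  using assms by (auto simp: abs_mult simp flip: right_diff_distrib distrib_left)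

lemma model_side_comparison_cos:
  assumes s: "0 < s" "sqrt \<bar>\<kappa>\<bar> * s \<le> 1/2" and t: "0 < t" "sqrt \<bar>\<kappa>\<bar> * t \<le> 1/2"
    and a: "\<bar>s - t\<bar> \<le> a" "a \<le> s + t"
  shows "-1 \<le> comparison_cos \<kappa> a s t \<and> comparison_cos \<kappa> a s t \<le> 1 \<and>
    model_side \<kappa> s t (comparison_cos \<kappa> a s t) = a"
proof -
  consider "\<kappa> = 0" | "\<kappa> > 0" | "\<kappa> < 0" by linarith
  then show ?thesis
  proof cases
    case 1
    then show ?thesis using euclidean_comparison_cos[OF s(1) t(1) a]
      by (simp add: comparison_cos_def model_side_def)
  next
    case 2
    let ?k = "sqrt \<kappa>"
    have k: "0 < ?k" "sqrt \<bar>\<kappa>\<bar> = ?k" using 2 by auto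
    from spherical_comparison_cos[of "?k * s" "?k * t" "?k * a"] triangle_bounds_scale[OF k(1) a]
    show ?thesis using 2 s t k by (simp add: comparison_cos_def model_side_def)
  next
    case 3
    let ?k = "sqrt (-\<kappa>)"
    have k: "0 < ?k" using 3 by auto
    from hyperbolic_comparison_cos[of "?k * s" "?k * t" "?k * a"] triangle_bounds_scale[OF k a]
    show ?thesis using 3 s t k by (simp add: comparison_cos_def model_side_def)
  qed
qed

lemma comparison_cos_ge:
  assumes s: "0 < s" "sqrt \<bar>\<kappa>\<bar> * s \<le> 1/2" and t: "0 < t" "sqrt \<bar>\<kappa>\<bar> * t \<le> 1/2"
    and c: "-1 \<le> c" "c \<le> 1" and b: "0 \<le> b" "b \<le> model_side \<kappa> s t c"
  shows "c \<le> comparison_cos \<kappa> b s t"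
proof -
  consider "\<kappa> = 0" | "\<kappa> > 0" | "\<kappa> < 0" by linarith
  then show ?thesis
  proof cases
    case 1
    then show ?thesis using euclidean_comparison_cos_ge[OF s(1) t(1) c, of b] b
      by (simp add: comparison_cos_def model_side_def)
  next
    case 2
    let ?k = "sqrt \<kappa>"
    have k: "0 < ?k" "sqrt \<bar>\<kappa>\<bar> = ?k" using 2 by auto
    have "?k * b \<le> arccos (cos (?k * s) * cos (?k * t) + sin (?k * s) * sin (?k * t) * c)"
      using b 2 k by (simp add: model_side_def pos_le_divide_eq mult.commute)
    from spherical_comparison_cos_ge[of "?k * s" "?k * t" c "?k * b", OF _ _ _ _ c _ this] s t k b
    show ?thesis using 2 by (simp add: comparison_cos_def)
  next
    case 3
    let ?k = "sqrt (-\<kappa>)"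
    have k: "0 < ?k" using 3 by auto
    have "?k * b \<le> arcosh (cosh (?k * s) * cosh (?k * t) - sinh (?k * s) * sinh (?k * t) * c)"
      using b 3 k by (simp add: model_side_def pos_le_divide_eq mult.commute)
    from hyperbolic_comparison_cos_ge[of "?k * s" "?k * t" c "?k * b", OF _ _ c _ this] s t k b
    show ?thesis using 3 by (simp add: comparison_cos_def)
  qed
qed

lemma comparison_cos_approx:
  assumes s: "0 < s" "sqrt \<bar>\<kappa>\<bar> * s \<le> 1/2" and t: "0 < t" "sqrt \<bar>\<kappa>\<bar> * t \<le> 1/2"
    and a: "\<bar>s - t\<bar> \<le> a" "a \<le> s + t"
  shows "\<bar>(s^2 + t^2 - a^2)/(2 * s * t) - comparison_cos \<kappa> a s t\<bar>
    \<le> 4 * \<bar>\<kappa>\<bar> * (cosh 1 + (cosh 1)^2) * (s + t)^2"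
proof -
  have c: "1 \<le> cosh 1 + (cosh (1::real))^2"
    using cosh_real_ge_1[of 1] zero_le_power2[of "cosh (1::real)"] by linarith
  consider "\<kappa> = 0" | "\<kappa> > 0" | "\<kappa> < 0" by linarith
  then show ?thesis
  proof cases
    case 1
    then show ?thesis by (simp add: comparison_cos_def)
  next
    case 2
    let ?k = "sqrt \<kappa>"
    have k: "0 < ?k" "sqrt \<bar>\<kappa>\<bar> = ?k" using 2 by auto
    have "(?k * s + ?k * t)^2 = ?k^2 * (s + t)^2"
      by (simp only: power_mult_distrib flip: distrib_left)
    then have "4 * (?k * s + ?k * t)^2 = 4 * \<bar>\<kappa>\<bar> * 1 * (s + t)^2" using 2 by simp
    also have "\<dots> \<le> 4 * \<bar>\<kappa>\<bar> * (cosh 1 + (cosh 1)^2) * (s + t)^2"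
      using c by (intro mult_right_mono mult_left_mono) auto
    finally have "4 * (?k * s + ?k * t)^2 \<le> 4 * \<bar>\<kappa>\<bar> * (cosh 1 + (cosh 1)^2) * (s + t)^2" .
    with spherical_comparison_cos_approx[of "?k * s" "?k * t" "?k * a"]
      triangle_bounds_scale[OF k(1) a] cos_quotient_scale[of ?k s t a] s t k
    show ?thesis using 2 by (simp add: comparison_cos_def)
  next
    case 3
    let ?k = "sqrt (-\<kappa>)"
    have k: "0 < ?k" using 3 by auto
    have "(?k * s + ?k * t)^2 = ?k^2 * (s + t)^2"
      by (simp only: power_mult_distrib flip: distrib_left)
    then have "4 * (cosh 1 + (cosh 1)^2) * (?k * s + ?k * t)^2
        = 4 * \<bar>\<kappa>\<bar> * (cosh 1 + (cosh 1)^2) * (s + t)^2"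
      using 3 by (simp add: ac_simps)
    with hyperbolic_comparison_cos_approx[of "?k * s" "?k * t" "?k * a"]
      triangle_bounds_scale[OF k a] cos_quotient_scale[of ?k s t a] s t k
    show ?thesis using 3 by (simp add: comparison_cos_def)
  qed
qed

lemma below_D_mono: "below_D \<kappa> r2 \<Longrightarrow> r \<le> r2 \<Longrightarrow> below_D \<kappa> r"
  unfolding below_D_def by auto

lemma model_hinge_exists:
  assumes s: "0 < s'" "s' \<le> s" "sqrt \<bar>\<kappa>\<bar> * s \<le> 1/2" and t: "0 < t" "sqrt \<bar>\<kappa>\<bar> * t \<le> 1/2"
    and c: "-1 \<le> c" "c \<le> 1"
  obtains p' q' r' x' where "p' \<in> model_space \<kappa>" "q' \<in> model_space \<kappa>" "r' \<in> model_space \<kappa>"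
      "x' \<in> model_space \<kappa>"
    and "model_dist \<kappa> p' q' = s" "model_dist \<kappa> q' r' = model_side \<kappa> s t c"
      "model_dist \<kappa> r' p' = t" "model_dist \<kappa> p' x' = s'" "model_dist \<kappa> x' q' = s - s'"
      "model_dist \<kappa> r' r' = 0" "model_dist \<kappa> x' r' = model_side \<kappa> s' t c"
proof -
  have ks': "sqrt \<bar>\<kappa>\<bar> * s' \<le> 1/2" using mult_left_mono[OF s(2), of "sqrt \<bar>\<kappa>\<bar>"] s by simp
  define S where "S = sqrt (1 - c^2)"
  have "c^2 \<le> 1" using c abs_square_le_1[of c] by (simp add: abs_le_iff)
  then have cS: "c^2 + S^2 = 1" unfolding S_def by simp
  have one: "(1::real)^2 + 0^2 = 1" by simp
  define p' where "p' = model_point \<kappa> 0 1 0"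
  define q' where "q' = model_point \<kappa> s 1 0"
  define r' where "r' = model_point \<kappa> t c S"
  define x' where "x' = model_point \<kappa> s' 1 0"
  show thesis
  proof (rule that)
    show "p' \<in> model_space \<kappa>" "q' \<in> model_space \<kappa>" "r' \<in> model_space \<kappa>" "x' \<in> model_space \<kappa>"
      unfolding p'_def q'_def r'_def x'_def using model_point_mem[OF one] model_point_mem[OF cS]
      by auto
    show "model_dist \<kappa> p' q' = s" "model_dist \<kappa> p' x' = s'"
      unfolding p'_def q'_def x'_def model_dist_model_point[OF one one]
      using model_side_zero(1)[of s \<kappa>] model_side_zero(1)[of s' \<kappa>] s ks' by simp_all
    show "model_dist \<kappa> q' r' = model_side \<kappa> s t c" "model_dist \<kappa> x' r' = model_side \<kappa> s' t c"
      unfolding q'_def r'_def x'_def model_dist_model_point[OF one cS] by simp_all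
    show "model_dist \<kappa> r' p' = t"
      unfolding p'_def r'_def model_dist_model_point[OF cS one] using model_side_zero(2)[of t \<kappa>] t
      by simp
    show "model_dist \<kappa> x' q' = s - s'"
      unfolding q'_def x'_def model_dist_model_point[OF one one]
      using model_side_one[of s' s \<kappa>] s ks' by simp
    show "model_dist \<kappa> r' r' = 0"
      unfolding r'_def model_dist_model_point[OF cS cS] using model_side_one[of t t \<kappa>] t cS
      by (simp add: power2_eq_square)
  qed
qed

section \<open>Angles in CAT(\<open>\<kappa>\<close>) spaces\<close>

lemma below_D_add:
  assumes "sqrt \<bar>\<kappa>\<bar> * s \<le> 1/2" "sqrt \<bar>\<kappa>\<bar> * t \<le> 1/2"
  shows "below_D \<kappa> (s + t)"
proof (cases "\<kappa> > 0")
  case True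
  have "sqrt \<kappa> * (s + t) \<le> 1" using assms True by (simp add: distrib_left)
  then have "s + t \<le> 1 / sqrt \<kappa>" using True by (simp add: pos_le_divide_eq mult.commute)
  also have "\<dots> < pi / sqrt \<kappa>" using True pi_gt3 by (intro divide_strict_right_mono) auto
  finally show ?thesis unfolding below_D_def by simp
qed (simp add: below_D_def)

lemma geodesic_path_dist:
  "geodesic_path l \<gamma> \<Longrightarrow> 0 \<le> s \<Longrightarrow> s \<le> l \<Longrightarrow> 0 \<le> t \<Longrightarrow> t \<le> l \<Longrightarrow> dist (\<gamma> s) (\<gamma> t) = \<bar>s - t\<bar>"
  unfolding geodesic_path_def by auto

lemma geodesic_path_restrict: "geodesic_path l \<gamma> \<Longrightarrow> 0 \<le> s \<Longrightarrow> s \<le> l \<Longrightarrow> geodesic_path s \<gamma>"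
  unfolding geodesic_path_def by auto

lemma geodesic_path_reverse:
  "geodesic_path l \<eta> \<Longrightarrow> 0 \<le> t \<Longrightarrow> t \<le> l \<Longrightarrow> geodesic_path t (\<lambda>u. \<eta> (t - u))"
  unfolding geodesic_path_def by (auto simp: abs_minus_commute)

text \<open>The CAT(\<open>\<kappa>\<close>) inequality for the triangle with vertices \<open>p\<close>, \<open>\<gamma> s\<close>, \<open>\<eta> t\<close>, whose third
  side is \<open>\<eta>\<close> reversed, applied to the point \<open>\<gamma> s'\<close> of the first side and to the vertex
  \<open>\<eta> t\<close>, seen as the point at parameter \<open>0\<close> of the third side (whence the hypothesis on
  \<open>model_dist \<kappa> r' r'\<close>).\<close>

lemma CAT_hinge_comparison:
  fixes \<gamma> \<eta> :: "real \<Rightarrow> 'a::metric_space"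
  assumes cat: "CAT \<kappa> TYPE('a)"
    and g: "geodesic_path l \<gamma>" "\<gamma> 0 = p" and h: "geodesic_path l' \<eta>" "\<eta> 0 = p"
    and s: "0 < s" "s \<le> l" and t: "0 < t" "t \<le> l'" and s': "0 \<le> s'" "s' \<le> s"
    and bD: "below_D \<kappa> (s + t)"
    and M: "p' \<in> model_space \<kappa>" "q' \<in> model_space \<kappa>" "r' \<in> model_space \<kappa>"
      "x' \<in> model_space \<kappa>"
    and d: "model_dist \<kappa> p' q' = s" "model_dist \<kappa> q' r' = dist (\<gamma> s) (\<eta> t)"
      "model_dist \<kappa> r' p' = t" "model_dist \<kappa> p' x' = s'" "model_dist \<kappa> x' q' = s - s'"
      "model_dist \<kappa> r' r' = 0"
  shows "dist (\<gamma> s') (\<eta> t) \<le> model_dist \<kappa> x' r'"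
proof -
  have dps: "dist p (\<gamma> s) = s" using geodesic_path_dist[OF g(1), of 0 s] g s by simp
  have dtp: "dist (\<eta> t) p = t" using geodesic_path_dist[OF h(1), of t 0] h t by simp
  have tri: "dist (\<gamma> s) (\<eta> t) \<le> s + t"
    using dist_triangle[of "\<gamma> s" "\<eta> t" p] dps dtp by (simp add: dist_commute)
  have H1: "\<forall>x y::'a. below_D \<kappa> (dist x y) \<longrightarrow> (\<exists>\<gamma>. geodesic_seg x y \<gamma>)"
    using cat unfolding CAT_def by blast
  obtain g2 where g2: "geodesic_seg (\<gamma> s) (\<eta> t) g2" using H1 below_D_mono[OF bD tri] by blast
  have g1: "geodesic_seg p (\<gamma> s) \<gamma>"
    unfolding geodesic_seg_def dps using geodesic_path_restrict[OF g(1)] s g by auto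
  have g3: "geodesic_seg (\<eta> t) p (\<lambda>u. \<eta> (t - u))"
    unfolding geodesic_seg_def dtp using geodesic_path_reverse[OF h(1)] t h by auto
  have per: "below_D \<kappa> ((dist p (\<gamma> s) + dist (\<gamma> s) (\<eta> t) + dist (\<eta> t) p) / 2)"
    using below_D_mono[OF bD] tri dps dtp by simp
  have C: "geodesic_seg p (\<gamma> s) \<gamma> \<and> geodesic_seg (\<gamma> s) (\<eta> t) g2 \<and>
    geodesic_seg (\<eta> t) p (\<lambda>u. \<eta> (t - u)) \<and>
    below_D \<kappa> ((dist p (\<gamma> s) + dist (\<gamma> s) (\<eta> t) + dist (\<eta> t) p) / 2) \<and>
    p' \<in> model_space \<kappa> \<and> q' \<in> model_space \<kappa> \<and> r' \<in> model_space \<kappa> \<and>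
    model_dist \<kappa> p' q' = dist p (\<gamma> s) \<and> model_dist \<kappa> q' r' = dist (\<gamma> s) (\<eta> t) \<and>
    model_dist \<kappa> r' p' = dist (\<eta> t) p"
    using g1 g2 g3 per M d dps dtp by simp
  note H = CAT_def[THEN iffD1, THEN conjunct2, rule_format, OF cat C]
  note H2 = H[OF insertI1, unfolded prod.case]
  have mem: "(\<eta> t, p, (\<lambda>u. \<eta> (t - u)), r', p')
      \<in> {(p, \<gamma> s, \<gamma>, p', q'), (\<gamma> s, \<eta> t, g2, q', r'), (\<eta> t, p, (\<lambda>u. \<eta> (t - u)), r', p')}"
    by simp
  note H3 = bspec[OF H2 mem, unfolded prod.case]
  have s'm: "s' \<in> {0..dist p (\<gamma> s)}" using s' dps by simp
  have t0: "(0::real) \<in> {0..dist (\<eta> t) p}" using dtp t by simp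
  note H4 = bspec[OF bspec[OF bspec[OF bspec[OF H3 s'm] t0] M(4)] M(3)]
  have "dist (\<gamma> s') (\<eta> (t - 0)) \<le> model_dist \<kappa> x' r'"
    by (rule H4[rule_format]) (use d dps dtp in auto)
  then show ?thesis by simp
qed

lemma geodesics_dist_bounds:
  assumes g: "geodesic_path l \<gamma>" "\<gamma> 0 = p" and h: "geodesic_path l' \<eta>" "\<eta> 0 = p"
    and s: "0 \<le> s" "s \<le> l" and t: "0 \<le> t" "t \<le> l'"
  shows "\<bar>s - t\<bar> \<le> dist (\<gamma> s) (\<eta> t) \<and> dist (\<gamma> s) (\<eta> t) \<le> s + t"
proof -
  have dps: "dist p (\<gamma> s) = s" using geodesic_path_dist[OF g(1), of 0 s] g s by simp
  have dtp: "dist (\<eta> t) p = t" using geodesic_path_dist[OF h(1), of t 0] h t by simp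
  show ?thesis using dist_triangle[of "\<gamma> s" "\<eta> t" p] dist_triangle[of p "\<eta> t" "\<gamma> s"]
      dist_triangle[of p "\<gamma> s" "\<eta> t"] dps dtp
    by (auto simp: dist_commute abs_le_iff)
qed

text \<open>Comparison angles at \<open>p\<close> shrink as \<open>s\<close> decreases: place the comparison triangle of
  \<open>p, \<gamma> s, \<eta> t\<close> with \<open>p'\<close> at the pole, so that its angle at \<open>p'\<close> has cosine \<open>c\<close>; the
  CAT(\<open>\<kappa>\<close>) inequality bounds \<open>d(\<gamma> s', \<eta> t)\<close> by the third side of the model hinge with
  sides \<open>s', t\<close> and the same angle.\<close>

lemma comparison_cos_antimono:
  fixes \<gamma> \<eta> :: "real \<Rightarrow> 'a::metric_space"
  assumes cat: "CAT \<kappa> TYPE('a)"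
    and g: "geodesic_path l \<gamma>" "\<gamma> 0 = p" and h: "geodesic_path l' \<eta>" "\<eta> 0 = p"
    and s: "0 < s'" "s' \<le> s" "s \<le> l" "sqrt \<bar>\<kappa>\<bar> * s \<le> 1/2"
    and t: "0 < t" "t \<le> l'" "sqrt \<bar>\<kappa>\<bar> * t \<le> 1/2"
  shows "comparison_cos \<kappa> (dist (\<gamma> s) (\<eta> t)) s t \<le> comparison_cos \<kappa> (dist (\<gamma> s') (\<eta> t)) s' t"
proof -
  define c where "c = comparison_cos \<kappa> (dist (\<gamma> s) (\<eta> t)) s t"
  have s0: "0 < s" using s by linarith
  have ks': "sqrt \<bar>\<kappa>\<bar> * s' \<le> 1/2" using mult_left_mono[OF s(2), of "sqrt \<bar>\<kappa>\<bar>"] s by simp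
  have c: "-1 \<le> c" "c \<le> 1" "model_side \<kappa> s t c = dist (\<gamma> s) (\<eta> t)"
    using model_side_comparison_cos[OF s0 s(4) t(1) t(3)] geodesics_dist_bounds[OF g h, of s t] s t
    unfolding c_def by auto
  obtain p' q' r' x' where M: "p' \<in> model_space \<kappa>" "q' \<in> model_space \<kappa>" "r' \<in> model_space \<kappa>"
      "x' \<in> model_space \<kappa>"
    and d: "model_dist \<kappa> p' q' = s" "model_dist \<kappa> q' r' = model_side \<kappa> s t c"
      "model_dist \<kappa> r' p' = t" "model_dist \<kappa> p' x' = s'" "model_dist \<kappa> x' q' = s - s'"
      "model_dist \<kappa> r' r' = 0" "model_dist \<kappa> x' r' = model_side \<kappa> s' t c"
    using model_hinge_exists[OF s(1,2,4) t(1,3) c(1,2)] .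
  have "dist (\<gamma> s') (\<eta> t) \<le> model_side \<kappa> s' t c"
    using CAT_hinge_comparison[OF cat g h s0 s(3) t(1,2) _ s(2) below_D_add[OF s(4) t(3)] M d(1)
        _ d(3-6)] s c(3) d(2,7)
    by simp
  from comparison_cos_ge[OF s(1) ks' t(1) t(3) c(1,2) zero_le_dist this] show ?thesis
    unfolding c_def .
qed

lemma comparison_cos_commute: "comparison_cos \<kappa> a s t = comparison_cos \<kappa> a t s"
  unfolding comparison_cos_def by (simp add: ac_simps)

lemma eventually_at_origin_quadrant:
  assumes "0 < d"
  shows "\<forall>\<^sub>F (s, t) in at (0, 0) within ({0<..} \<times> {0<..}). 0 < s \<and> s < d \<and> 0 < t \<and> (t::real) < d"
proof -
  have key: "s < d \<and> t < d" if "dist (s, t) (0, 0) < d" for s t :: real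
  proof -
    have "dist (s, t) (0, 0) = sqrt (s^2 + t^2)" by (simp add: dist_Pair_Pair)
    then show ?thesis
      using that real_sqrt_sum_squares_ge1[of s t] real_sqrt_sum_squares_ge2[of t s] by linarith
  qed
  show ?thesis unfolding eventually_at
  proof (intro exI[of _ d] conjI ballI impI assms)
    fix x :: "real \<times> real" assume x: "x \<in> {0<..} \<times> {0<..}" "x \<noteq> (0, 0) \<and> dist x (0, 0) < d"
    obtain s t where "x = (s, t)" by (cases x)
    with x key[of s t] show "case x of (s, t) \<Rightarrow> 0 < s \<and> s < d \<and> 0 < t \<and> t < d" by simp
  qed
qed

lemma tendsto_Sup_of_antimono:
  fixes C :: "real \<Rightarrow> real \<Rightarrow> real"
  assumes \<delta>: "0 < \<delta>"
    and bdd: "\<And>s t. 0 < s \<Longrightarrow> s \<le> \<delta> \<Longrightarrow> 0 < t \<Longrightarrow> t \<le> \<delta> \<Longrightarrow> C s t \<le> B"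
    and anti_s: "\<And>s s' t. 0 < s' \<Longrightarrow> s' \<le> s \<Longrightarrow> s \<le> \<delta> \<Longrightarrow> 0 < t \<Longrightarrow> t \<le> \<delta> \<Longrightarrow> C s t \<le> C s' t"
    and anti_t: "\<And>s t t'. 0 < s \<Longrightarrow> s \<le> \<delta> \<Longrightarrow> 0 < t' \<Longrightarrow> t' \<le> t \<Longrightarrow> t \<le> \<delta> \<Longrightarrow> C s t \<le> C s t'"
  defines "L \<equiv> Sup {C s t |s t. 0 < s \<and> s \<le> \<delta> \<and> 0 < t \<and> t \<le> \<delta>}"
  shows "((\<lambda>(s, t). C s t) \<longlongrightarrow> L) (at (0, 0) within ({0<..} \<times> {0<..}))"
    and "\<And>s t. 0 < s \<Longrightarrow> s \<le> \<delta> \<Longrightarrow> 0 < t \<Longrightarrow> t \<le> \<delta> \<Longrightarrow> C s t \<le> L"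
proof -
  define A where "A = {C s t |s t. 0 < s \<and> s \<le> \<delta> \<and> 0 < t \<and> t \<le> \<delta>}"
  have A: "A \<noteq> {}" "bdd_above A" unfolding A_def using \<delta> bdd by (auto intro!: bdd_aboveI[of _ B])
  show up: "C s t \<le> L" if "0 < s" "s \<le> \<delta>" "0 < t" "t \<le> \<delta>" for s t
    unfolding L_def A_def[symmetric]
    by (rule cSup_upper[OF _ A(2)]) (use that in \<open>auto simp: A_def\<close>)
  show "((\<lambda>(s, t). C s t) \<longlongrightarrow> L) (at (0, 0) within ({0<..} \<times> {0<..}))"
  proof (rule order_tendstoI)
    fix y assume "y < L"
    then obtain s0 t0 where st0: "0 < s0" "s0 \<le> \<delta>" "0 < t0" "t0 \<le> \<delta>" "y < C s0 t0"
      using less_cSup_iff[OF A] unfolding L_def A_def[symmetric] by (auto simp: A_def)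
    have key: "y < C s t" if st: "0 < s" "s < min s0 t0" "0 < t" "t < min s0 t0" for s t
    proof -
      have "C s0 t0 \<le> C s t0" using anti_s[of s s0 t0] st st0 by auto
      also have "\<dots> \<le> C s t" using anti_t[of s t t0] st st0 by auto
      finally show "y < C s t" using st0 by linarith
    qed
    have "0 < min s0 t0" using st0 by simp
    show "\<forall>\<^sub>F x in at (0, 0) within ({0<..} \<times> {0<..}). y < (case x of (s, t) \<Rightarrow> C s t)"
      by (rule eventually_mono[OF eventually_at_origin_quadrant[OF \<open>0 < min s0 t0\<close>]])
        (auto intro: key)
  next
    fix y assume "L < y"
    have key: "C s t < y" if "0 < s" "s < \<delta>" "0 < t" "t < \<delta>" for s t
      using up[of s t] that \<open>L < y\<close> by simp
    show "\<forall>\<^sub>F x in at (0, 0) within ({0<..} \<times> {0<..}). (case x of (s, t) \<Rightarrow> C s t) < y"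
      by (rule eventually_mono[OF eventually_at_origin_quadrant[OF \<delta>]]) (auto intro: key)
  qed
qed

lemma tendsto_of_approx_sq:
  fixes E C :: "real \<Rightarrow> real \<Rightarrow> real"
  assumes C: "((\<lambda>(s, t). C s t) \<longlongrightarrow> L) (at (0, 0) within ({0<..} \<times> {0<..}))"
    and approx: "\<forall>\<^sub>F (s, t) in at (0, 0) within ({0<..} \<times> {0<..}). \<bar>E s t - C s t\<bar> \<le> K * (s + t)^2"
  shows "((\<lambda>(s, t). E s t) \<longlongrightarrow> L) (at (0, 0) within ({0<..} \<times> {0<..}))"
proof -
  have id: "((\<lambda>x. x) \<longlongrightarrow> (0::real, 0::real)) (at (0, 0) within ({0<..} \<times> {0<..}))"
    by (rule tendsto_ident_at)
  have "((\<lambda>x. K * (fst x + snd x)^2) \<longlongrightarrow> K * (fst (0::real, 0::real) + snd (0::real, 0::real))^2)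
      (at (0, 0) within ({0<..} \<times> {0<..}))"
    by (intro tendsto_mult tendsto_const tendsto_power tendsto_add
        tendsto_fst[OF id] tendsto_snd[OF id])
  then have g0: "((\<lambda>x. K * (fst x + snd x)^2) \<longlongrightarrow> 0) (at (0, 0) within ({0<..} \<times> {0<..}))"
    by simp
  have "\<forall>\<^sub>F x in at (0, 0) within ({0<..} \<times> {0<..}).
      norm (E (fst x) (snd x) - C (fst x) (snd x)) \<le> K * (fst x + snd x)^2"
    using approx unfolding case_prod_beta' real_norm_def .
  from Lim_transform[OF C[unfolded case_prod_beta'] Lim_null_comparison[OF this g0]] show ?thesis
    unfolding case_prod_beta' .
qed

lemma at_within_open_quadrant_nontrivial: "at ((0::real), (0::real)) within ({0<..} \<times> {0<..}) \<noteq> bot"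
proof -
  have "(0::real, 0::real) islimpt ({0<..} \<times> {0<..})"
    unfolding islimpt_approachable
  proof (intro allI impI)
    fix e :: real assume e: "0 < e"
    have "sqrt ((e/4)^2 + (e/4)^2) < sqrt (e^2)"
      using e by (intro real_sqrt_less_mono) (simp add: power2_eq_square)
    then have "dist (e/4, e/4) (0::real, 0::real) < e" using e by (simp add: dist_Pair_Pair)
    note dd = this
    show "\<exists>x'\<in>{0::real<..} \<times> {0::real<..}. x' \<noteq> (0, 0) \<and> dist x' (0, 0) < e"
    proof (rule bexI[where x="(e/4, e/4)"])
      show "(e/4, e/4) \<in> {0<..} \<times> {(0::real)<..}" using e by auto
      show "(e/4, e/4) \<noteq> (0::real, 0::real) \<and> dist (e/4, e/4) (0::real, 0::real) < e"
        using e dd by auto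
    qed
  qed
  then show ?thesis using trivial_limit_within by blast
qed

lemma small_radius_exists:
  assumes "0 < l" "0 < l'"
  obtains \<delta> where "0 < \<delta>" "\<delta> \<le> l" "\<delta> \<le> l'" "sqrt \<bar>\<kappa>\<bar> * \<delta> \<le> 1/2"
proof -
  define \<delta> where "\<delta> = min (min l l') (1 / (2 * (sqrt \<bar>\<kappa>\<bar> + 1)))"
  have pos: "0 < 2 * (sqrt \<bar>\<kappa>\<bar> + 1)" by (simp add: add_nonneg_pos)
  have \<delta>: "0 < \<delta>" "\<delta> \<le> l" "\<delta> \<le> l'" using assms pos unfolding \<delta>_def by auto
  have "\<delta> \<le> 1 / (2 * (sqrt \<bar>\<kappa>\<bar> + 1))" unfolding \<delta>_def by simp
  then have "\<delta> * (2 * (sqrt \<bar>\<kappa>\<bar> + 1)) \<le> 1" by (simp only: pos_le_divide_eq[OF pos])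
  then have "sqrt \<bar>\<kappa>\<bar> * \<delta> \<le> 1/2" using \<delta>(1) by (simp add: algebra_simps)
  with \<delta> show thesis by (rule that)
qed

lemma comparison_cos_geodesics_tendsto:
  fixes \<gamma> \<eta> :: "real \<Rightarrow> 'a::metric_space"
  assumes cat: "CAT \<kappa> TYPE('a)"
    and g: "geodesic_path l \<gamma>" "\<gamma> 0 = p" and h: "geodesic_path l' \<eta>" "\<eta> 0 = p"
    and \<delta>: "0 < \<delta>" "\<delta> \<le> l" "\<delta> \<le> l'" "sqrt \<bar>\<kappa>\<bar> * \<delta> \<le> 1/2"
  obtains L where "-1 \<le> L" "L \<le> 1"
    "((\<lambda>(s, t). comparison_cos \<kappa> (dist (\<gamma> s) (\<eta> t)) s t) \<longlongrightarrow> L) (at (0, 0) within ({0<..} \<times> {0<..}))"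
proof -
  define C where "C = (\<lambda>s t. comparison_cos \<kappa> (dist (\<gamma> s) (\<eta> t)) s t)"
  have small: "sqrt \<bar>\<kappa>\<bar> * x \<le> 1/2" if "0 \<le> x" "x \<le> \<delta>" for x
    using mult_left_mono[OF that(2), of "sqrt \<bar>\<kappa>\<bar>"] \<delta>(4) by simp
  have C_bounds: "-1 \<le> C s t \<and> C s t \<le> 1" if "0 < s" "s \<le> \<delta>" "0 < t" "t \<le> \<delta>" for s t
    using model_side_comparison_cos[of s \<kappa> t "dist (\<gamma> s) (\<eta> t)"]
      geodesics_dist_bounds[OF g h, of s t] that small \<delta> unfolding C_def by auto
  have anti_s: "C s t \<le> C s' t" if "0 < s'" "s' \<le> s" "s \<le> \<delta>" "0 < t" "t \<le> \<delta>" for s s' t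
    unfolding C_def by (rule comparison_cos_antimono[OF cat g h]) (use that small \<delta> in auto)
  have anti_t: "C s t \<le> C s t'" if "0 < s" "s \<le> \<delta>" "0 < t'" "t' \<le> t" "t \<le> \<delta>" for s t t'
  proof -
    have "comparison_cos \<kappa> (dist (\<eta> t) (\<gamma> s)) t s \<le> comparison_cos \<kappa> (dist (\<eta> t') (\<gamma> s)) t' s"
      by (rule comparison_cos_antimono[OF cat h g]) (use that small \<delta> in auto)
    then show ?thesis unfolding C_def by (simp add: dist_commute comparison_cos_commute[of \<kappa> _ s])
  qed
  have "\<And>s t. 0 < s \<Longrightarrow> s \<le> \<delta> \<Longrightarrow> 0 < t \<Longrightarrow> t \<le> \<delta> \<Longrightarrow> C s t \<le> 1"
    using C_bounds by blast
  from tendsto_Sup_of_antimono[where C = C and B = 1, OF \<delta>(1) this anti_s anti_t]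
  obtain L where C_lim: "((\<lambda>(s, t). C s t) \<longlongrightarrow> L) (at (0, 0) within ({0<..} \<times> {0<..}))"
    and C_le: "\<And>s t. 0 < s \<Longrightarrow> s \<le> \<delta> \<Longrightarrow> 0 < t \<Longrightarrow> t \<le> \<delta> \<Longrightarrow> C s t \<le> L"
    by blast
  have "L \<le> 1"
  proof (rule tendsto_upperbound[OF C_lim _ at_within_open_quadrant_nontrivial])
    show "\<forall>\<^sub>F x in at (0, 0) within ({0<..} \<times> {0<..}). (case x of (s, t) \<Rightarrow> C s t) \<le> 1"
      by (rule eventually_mono[OF eventually_at_origin_quadrant[OF \<delta>(1)]]) (clarsimp simp: C_bounds)
  qed
  moreover have "-1 \<le> L" using C_le[of \<delta> \<delta>] C_bounds[of \<delta> \<delta>] \<delta> by auto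
  ultimately show thesis using that C_lim unfolding C_def by blast
qed

lemma comparison_quotient_tendsto:
  fixes \<gamma> \<eta> :: "real \<Rightarrow> 'a::metric_space"
  assumes cat: "CAT \<kappa> TYPE('a)"
    and g: "geodesic_path l \<gamma>" "0 < l" "\<gamma> 0 = p" and h: "geodesic_path l' \<eta>" "0 < l'" "\<eta> 0 = p"
  obtains L where "-1 \<le> L" "L \<le> 1"
    "((\<lambda>(s, t). (s^2 + t^2 - (dist (\<gamma> s) (\<eta> t))^2) / (2 * s * t)) \<longlongrightarrow> L)
      (at (0, 0) within ({0<..} \<times> {0<..}))"
proof -
  obtain \<delta> where \<delta>: "0 < \<delta>" "\<delta> \<le> l" "\<delta> \<le> l'" "sqrt \<bar>\<kappa>\<bar> * \<delta> \<le> 1/2"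
    using small_radius_exists[OF g(2) h(2)] .
  obtain L where L: "-1 \<le> L" "L \<le> 1"
    and C_lim: "((\<lambda>(s, t). comparison_cos \<kappa> (dist (\<gamma> s) (\<eta> t)) s t) \<longlongrightarrow> L)
      (at (0, 0) within ({0<..} \<times> {0<..}))"
    using comparison_cos_geodesics_tendsto[OF cat g(1,3) h(1,3) \<delta>] .
  have "\<bar>(s^2 + t^2 - (dist (\<gamma> s) (\<eta> t))^2) / (2 * s * t) - comparison_cos \<kappa> (dist (\<gamma> s) (\<eta> t)) s t\<bar>
      \<le> 4 * \<bar>\<kappa>\<bar> * (cosh 1 + (cosh 1)^2) * (s + t)^2"
    if "0 < s" "s < \<delta>" "0 < t" "t < \<delta>" for s t
  proof (rule comparison_cos_approx)
    show "sqrt \<bar>\<kappa>\<bar> * s \<le> 1/2" "sqrt \<bar>\<kappa>\<bar> * t \<le> 1/2"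
      using mult_left_mono[of s \<delta> "sqrt \<bar>\<kappa>\<bar>"] mult_left_mono[of t \<delta> "sqrt \<bar>\<kappa>\<bar>"] that \<delta> by auto
  qed (use that \<delta> geodesics_dist_bounds[OF g(1,3) h(1,3), of s t] in auto)
  then have "\<forall>\<^sub>F (s, t) in at (0, 0) within ({0<..} \<times> {0<..}).
      \<bar>(s^2 + t^2 - (dist (\<gamma> s) (\<eta> t))^2) / (2 * s * t) - comparison_cos \<kappa> (dist (\<gamma> s) (\<eta> t)) s t\<bar>
        \<le> 4 * \<bar>\<kappa>\<bar> * (cosh 1 + (cosh 1)^2) * (s + t)^2"
    by (intro eventually_mono[OF eventually_at_origin_quadrant[OF \<delta>(1)]]) auto
  from that[OF L tendsto_of_approx_sq[OF C_lim this]] show thesis .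
qed

lemma cos_angle_tendsto:
  fixes \<gamma> \<eta> :: "real \<Rightarrow> 'a::metric_space"
  assumes cat: "CAT \<kappa> TYPE('a)"
    and g: "geodesic_path l \<gamma>" "0 < l" "\<gamma> 0 = p" and h: "geodesic_path l' \<eta>" "0 < l'" "\<eta> 0 = p"
  shows "((\<lambda>(s, t). (s^2 + t^2 - (dist (\<gamma> s) (\<eta> t))^2) / (2 * s * t)) \<longlongrightarrow> cos (angle \<gamma> \<eta>))
    (at (0, 0) within ({0<..} \<times> {0<..}))"
proof -
  obtain L where L: "-1 \<le> L" "L \<le> 1"
    and lim: "((\<lambda>(s, t). (s^2 + t^2 - (dist (\<gamma> s) (\<eta> t))^2) / (2 * s * t)) \<longlongrightarrow> L)
      (at (0, 0) within ({0<..} \<times> {0<..}))"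
    using comparison_quotient_tendsto[OF cat g h] .
  have "cos_angle \<gamma> \<eta> = L"
    unfolding cos_angle_def by (rule tendsto_Lim[OF at_within_open_quadrant_nontrivial lim])
  then have "cos (angle \<gamma> \<eta>) = L" unfolding angle_def using L by simp
  then show ?thesis using lim by simp
qed

section \<open>First variation\<close>

lemma side_le_of_cos_quotient_gt:
  fixes s a L e lam :: real
  assumes s: "0 < s" and a: "0 \<le> a" and L: "-1 \<le> L" "L \<le> 1" and e: "0 < e" "e \<le> 1"
    and lam: "2 \<le> lam" "lam * e = 3 + 2 * e"
    and q: "L - e/2 < (s^2 + (lam * s)^2 - a^2) / (2 * s * (lam * s))"
  shows "a \<le> s * (lam - L + e)"
proof -
  have "(L - e/2) * (2 * s * (lam * s)) < s^2 + (lam * s)^2 - a^2"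
    using q s lam by (simp add: pos_less_divide_eq)
  then have a2: "a^2 < s^2 * (1 + lam^2 - 2 * lam * L + lam * e)"
    by (simp add: power2_eq_square algebra_simps)
  have "(lam - L + e)^2 - (1 + lam^2 - 2 * lam * L + lam * e)
      = lam * e - 2 * (L * e) + L^2 + e^2 - 1"
    by (simp add: power2_eq_square algebra_simps)
  moreover have "L * e \<le> 1 * e" using L e by (intro mult_right_mono) auto
  ultimately have "1 + lam^2 - 2 * lam * L + lam * e \<le> (lam - L + e)^2"
    using lam(2) zero_le_power2[of L] zero_le_power2[of e] by linarith
  then have "s^2 * (1 + lam^2 - 2 * lam * L + lam * e) \<le> s^2 * (lam - L + e)^2"
    by (intro mult_left_mono) auto
  then have "a^2 \<le> (s * (lam - L + e))^2" using a2 by (simp add: power_mult_distrib)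
  moreover have "0 \<le> s * (lam - L + e)" using s lam L e by simp
  ultimately show ?thesis by (rule power2_le_imp_le)
qed

text \<open>First variation inequality: \<open>d(\<gamma> s, x) \<le> d(m, x) - s cos \<angle>(\<gamma>, \<eta>) + o(s)\<close>, obtained from
  the triangle inequality through \<open>\<eta> (lam s)\<close> with \<open>lam\<close> large.\<close>

lemma first_variation:
  fixes \<gamma> \<eta> :: "real \<Rightarrow> 'a::metric_space"
  assumes cat: "CAT \<kappa> TYPE('a)"
    and g: "geodesic_path l \<gamma>" "0 < l" "\<gamma> 0 = m"
    and h: "geodesic_path d \<eta>" "0 < d" "\<eta> 0 = m" "\<eta> d = x"
    and e: "0 < \<epsilon>"
  shows "\<exists>\<delta>>0. \<forall>s. 0 < s \<and> s < \<delta> \<longrightarrow> dist (\<gamma> s) x - d \<le> (- cos (angle \<gamma> \<eta>) + \<epsilon>) * s"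
proof -
  define L where "L = cos (angle \<gamma> \<eta>)"
  have L: "-1 \<le> L" "L \<le> 1"
    "((\<lambda>(s, t). (s^2 + t^2 - (dist (\<gamma> s) (\<eta> t))^2) / (2 * s * t)) \<longlongrightarrow> L)
       (at (0, 0) within ({0<..} \<times> {0<..}))"
    using cos_angle_tendsto[OF cat g h(1,2,3)] unfolding L_def by auto
  define e' where "e' = min \<epsilon> 1"
  have e': "0 < e'" "e' \<le> 1" "e' \<le> \<epsilon>" unfolding e'_def using e by auto
  define lam where "lam = 3 / e' + 2"
  have lam: "2 \<le> lam" "lam * e' = 3 + 2 * e'" unfolding lam_def using e' by (auto simp: field_simps)
  from tendstoD[OF L(3), of "e'/2"] e'
  obtain r where r: "0 < r" and rr: "\<And>s t. 0 < s \<Longrightarrow> 0 < t \<Longrightarrow> dist (s, t) (0, 0) < r \<Longrightarrow>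
      \<bar>(s^2 + t^2 - (dist (\<gamma> s) (\<eta> t))^2) / (2 * s * t) - L\<bar> < e'/2"
    unfolding eventually_at dist_real_def by force
  define \<delta> where "\<delta> = min l (min (d / lam) (r / (lam + 1)))"
  have \<delta>0: "0 < \<delta>" unfolding \<delta>_def using g h r lam by auto
  show ?thesis
  proof (intro exI[of _ \<delta>] conjI allI impI \<delta>0)
    fix s :: real assume s: "0 < s \<and> s < \<delta>"
    define t where "t = lam * s"
    have t: "0 < t" "t \<le> d" unfolding t_def using s lam
      by (auto simp: \<delta>_def pos_less_divide_eq mult.commute)
    have "dist (s, t) (0, 0) \<le> s + t"
      using sqrt_add_le_add_sqrt[of "s^2" "t^2"] s t by (simp add: dist_Pair_Pair)
    also have "\<dots> < r"
      using s lam unfolding t_def \<delta>_def by (simp add: pos_less_divide_eq algebra_simps)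
    finally have "\<bar>(s^2 + t^2 - (dist (\<gamma> s) (\<eta> t))^2) / (2 * s * t) - L\<bar> < e'/2"
      using rr s t by blast
    then have "L - e'/2 < (s^2 + t^2 - (dist (\<gamma> s) (\<eta> t))^2) / (2 * s * t)" by linarith
    then have a: "dist (\<gamma> s) (\<eta> t) \<le> s * (lam - L + e')"
      unfolding t_def using side_le_of_cos_quotient_gt[OF _ _ L(1,2) e'(1,2) lam] s by simp
    have "dist (\<eta> t) x = d - t" using geodesic_path_dist[OF h(1), of t d] h t by simp
    then have "dist (\<gamma> s) x - d \<le> s * (lam - L + e') - t"
      using a dist_triangle[of "\<gamma> s" x "\<eta> t"] by simp
    also have "\<dots> = (- L + e') * s" unfolding t_def by (simp add: algebra_simps)
    also have "\<dots> \<le> (- L + \<epsilon>) * s" using e' s by (intro mult_right_mono) auto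
    finally show "dist (\<gamma> s) x - d \<le> (- cos (angle \<gamma> \<eta>) + \<epsilon>) * s" unfolding L_def .
  qed
qed

definition step_size :: "real \<Rightarrow> nat \<Rightarrow> real" where
  "step_size l n = min l 1 / real (Suc n)"

lemma step_size_bounds: "0 < l \<Longrightarrow> 0 < step_size l n \<and> step_size l n \<le> l \<and> step_size l n \<le> 1"
  unfolding step_size_def
  by (auto simp: divide_simps) (simp_all add: min_le_iff_disj order_trans[of _ "1::real"])

lemma eventually_step_size_less:
  assumes "0 < \<delta>" shows "eventually (\<lambda>n. step_size l n < \<delta>) sequentially"
proof -
  have "(\<lambda>n. min l 1 / real (Suc n)) \<longlonglongrightarrow> 0"
    using lim_const_over_n by (rule LIMSEQ_Suc)
  from order_tendstoD(2)[OF this assms] show ?thesis unfolding step_size_def .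
qed

definition dist_sq_quotient :: "(real \<Rightarrow> 'a::metric_space) \<Rightarrow> real \<Rightarrow> 'a \<Rightarrow> 'a \<Rightarrow> nat \<Rightarrow> real" where
  "dist_sq_quotient \<gamma> l m x n =
     ((dist (\<gamma> (step_size l n)) x)^2 - (dist m x)^2) / (2 * step_size l n)"

lemma dist_step_diff_le:
  assumes "geodesic_path l \<gamma>" "\<gamma> 0 = m" "0 < l"
  shows "\<bar>dist (\<gamma> (step_size l n)) x - dist m x\<bar> \<le> step_size l n"
proof -
  have "dist m (\<gamma> (step_size l n)) = step_size l n"
    using geodesic_path_dist[OF assms(1), of 0 "step_size l n"] assms
      step_size_bounds[OF assms(3), of n]
    by simp
  then show ?thesis
    using dist_triangle[of "\<gamma> (step_size l n)" x m] dist_triangle[of m x "\<gamma> (step_size l n)"]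
    by (simp add: dist_commute abs_le_iff)
qed

lemma dist_sq_quotient_bounds:
  assumes g: "geodesic_path l \<gamma>" "\<gamma> 0 = m" "0 < l"
  shows "\<bar>dist_sq_quotient \<gamma> l m x n\<bar> \<le> dist m x + 1/2"
proof -
  define s where "s = step_size l n"
  define D where "D = dist (\<gamma> s) x"
  define d where "d = dist m x"
  have s: "0 < s" "s \<le> 1" using step_size_bounds[OF g(3)] unfolding s_def by auto
  have Dd: "\<bar>D - d\<bar> \<le> s" using dist_step_diff_le[OF g] unfolding D_def d_def s_def .
  have "\<bar>D^2 - d^2\<bar> = \<bar>D - d\<bar> * \<bar>D + d\<bar>"
    by (simp add: power2_eq_square algebra_simps flip: abs_mult)
  also have "\<dots> \<le> s * (2 * d + s)" using Dd by (intro mult_mono) (auto simp: D_def d_def abs_le_iff)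
  finally have "\<bar>D^2 - d^2\<bar> / (2 * s) \<le> s * (2 * d + s) / (2 * s)"
    using s by (intro divide_right_mono) auto
  also have "\<dots> = d + s/2" using s by (simp add: field_simps)
  finally show ?thesis
    using s unfolding dist_sq_quotient_def s_def[symmetric] D_def[symmetric] d_def[symmetric]
    by (simp add: abs_divide)
qed

lemma eventually_dist_sq_quotient_le:
  fixes \<gamma> \<eta> :: "real \<Rightarrow> 'a::metric_space"
  assumes cat: "CAT \<kappa> TYPE('a)"
    and g: "geodesic_path l \<gamma>" "0 < l" "\<gamma> 0 = m"
    and h: "0 < dist m x \<Longrightarrow> geodesic_seg m x \<eta>"
    and e: "0 < \<epsilon>"
  shows "\<forall>\<^sub>F n in sequentially. dist_sq_quotient \<gamma> l m x n
           \<le> dist m x * (- cos (angle \<gamma> \<eta>) + \<epsilon>) + step_size l n / 2"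
proof (cases "dist m x = 0")
  case True
  then have "x = m" by simp
  have "dist (\<gamma> (step_size l n)) m = step_size l n" for n
    using geodesic_path_dist[OF g(1), of "step_size l n" 0] g step_size_bounds[OF g(2), of n]
    by simp
  then show ?thesis using True step_size_bounds[OF g(2)] unfolding dist_sq_quotient_def \<open>x = m\<close>
    by (simp add: power2_eq_square)
next
  case False
  define d where "d = dist m x"
  then have d: "0 < d" using False by simp
  have "geodesic_seg m x \<eta>" using h d unfolding d_def by simp
  then have hh: "geodesic_path d \<eta>" "\<eta> 0 = m" "\<eta> d = x" unfolding geodesic_seg_def d_def by auto
  obtain \<delta> where \<delta>: "0 < \<delta>"
    "\<And>s. 0 < s \<and> s < \<delta> \<Longrightarrow> dist (\<gamma> s) x - d \<le> (- cos (angle \<gamma> \<eta>) + \<epsilon>) * s"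
    using first_variation[OF cat g hh(1) d hh(2,3) e] by blast
  show ?thesis using eventually_step_size_less[where l = l, OF \<delta>(1)]
  proof eventually_elim
    case (elim n)
    define s where "s = step_size l n"
    define D where "D = dist (\<gamma> s) x"
    have s: "0 < s" "s < \<delta>" using elim step_size_bounds[OF g(2)] unfolding s_def by auto
    have "\<bar>D - d\<bar> \<le> s" using dist_step_diff_le[OF g(1,3,2)] unfolding D_def d_def s_def .
    then have "(D - d)^2 \<le> s^2" by (simp add: power2_le_iff_abs_le)
    moreover have "2 * d * (D - d) \<le> 2 * d * ((- cos (angle \<gamma> \<eta>) + \<epsilon>) * s)"
      using \<delta>(2)[of s] s d unfolding D_def by (intro mult_left_mono) auto
    ultimately have "D^2 - d^2 \<le> 2 * d * ((- cos (angle \<gamma> \<eta>) + \<epsilon>) * s) + s^2"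
      by (simp add: power2_eq_square algebra_simps)
    then have "(D^2 - d^2) / (2 * s) \<le> (2 * d * ((- cos (angle \<gamma> \<eta>) + \<epsilon>) * s) + s^2) / (2 * s)"
      using s by (intro divide_right_mono) auto
    also have "\<dots> = d * (- cos (angle \<gamma> \<eta>) + \<epsilon>) + s / 2"
      using s by (simp add: field_simps power2_eq_square)
    finally show ?case unfolding dist_sq_quotient_def D_def s_def d_def .
  qed
qed

text \<open>The shift by \<open>d(m, x) + 1\<close> makes the quotients nonnegative, so that Fatou's lemma applies
  to them below.\<close>

lemma liminf_dist_sq_quotient_ge:
  fixes \<gamma> \<eta> :: "real \<Rightarrow> 'a::metric_space"
  assumes cat: "CAT \<kappa> TYPE('a)"
    and g: "geodesic_path l \<gamma>" "0 < l" "\<gamma> 0 = m"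
    and h: "0 < dist m x \<Longrightarrow> geodesic_seg m x \<eta>"
  shows "ennreal (dist m x + 1 + dist m x * cos (angle \<gamma> \<eta>))
           \<le> liminf (\<lambda>n. ennreal (dist m x + 1 - dist_sq_quotient \<gamma> l m x n))"
proof -
  define d where "d = dist m x"
  define L where "L = cos (angle \<gamma> \<eta>)"
  define c where "c = d + 1 + d * L"
  have d0: "0 \<le> d" unfolding d_def by simp
  have "- d \<le> d * L" using d0 cos_ge_minus_one[of "angle \<gamma> \<eta>"] unfolding L_def
    by (metis mult.commute mult_left_mono mult_minus1_right)
  then have c1: "1 \<le> c" unfolding c_def by linarith
  show ?thesis unfolding le_Liminf_iff d_def[symmetric] L_def[symmetric] c_def[symmetric]
  proof (intro allI impI)
    fix y assume y: "y < ennreal c"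
    then obtain y' where yy: "y = ennreal y'" "0 \<le> y'"
      by (cases y) auto
    have y'c: "y' < c" using y yy c1 by (simp add: ennreal_less_iff)
    define \<epsilon> where "\<epsilon> = (c - y') / (2 * (d + 1))"
    have e: "0 < \<epsilon>" unfolding \<epsilon>_def using y'c d0 by simp
    have de: "(d + 1) * \<epsilon> = (c - y') / 2" unfolding \<epsilon>_def using d0 by (simp add: field_simps)
    have "\<forall>\<^sub>F n in sequentially. dist_sq_quotient \<gamma> l m x n \<le> d * (- L + \<epsilon>) + step_size l n / 2"
      unfolding d_def L_def by (rule eventually_dist_sq_quotient_le[OF cat g _ e], rule h)
    then show "\<forall>\<^sub>F n in sequentially. y < ennreal (d + 1 - dist_sq_quotient \<gamma> l m x n)"
      using eventually_step_size_less[where l = l, OF e]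
    proof eventually_elim
      case (elim n)
      have "y' < d + 1 - dist_sq_quotient \<gamma> l m x n"
        using elim de e mult_nonneg_nonneg[OF e[THEN less_imp_le] d0] unfolding c_def
        by (simp add: algebra_simps)
      then show ?case using yy by (simp add: ennreal_less_iff)
    qed
  qed
qed

section \<open>The Frechet function on the tangent cone\<close>

lemma ennreal_integral_le_nn_integral:
  fixes f g :: "'b \<Rightarrow> real"
  assumes "integrable M f" "AE x in M. f x \<le> g x"
  shows "ennreal (\<integral>x. f x \<partial>M) \<le> (\<integral>\<^sup>+ x. ennreal (g x) \<partial>M)"
proof -
  have "ennreal (\<integral>x. f x \<partial>M) \<le> ennreal (\<integral>x. max (f x) 0 \<partial>M)"
    using assms(1) by (intro ennreal_leI integral_mono) auto
  also have "\<dots> = (\<integral>\<^sup>+ x. ennreal (max (f x) 0) \<partial>M)"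
    using assms(1) by (subst nn_integral_eq_integral) auto
  also have "\<dots> = (\<integral>\<^sup>+ x. ennreal (f x) \<partial>M)"
    by (rule nn_integral_cong) (simp add: max_def ennreal_neg)
  also have "\<dots> \<le> (\<integral>\<^sup>+ x. ennreal (g x) \<partial>M)"
    using assms(2) by (intro nn_integral_mono_AE) (auto elim: eventually_mono intro: ennreal_leI)
  finally show ?thesis .
qed

lemma frechet_nonneg: "0 \<le> frechet \<mu> p"
  unfolding frechet_def by (simp add: integral_nonneg_AE)

lemma tdist_logm_sq:
  assumes "0 \<le> t"
  shows "(tdist (\<gamma>, t) (logm m x))^2
    = t^2 + (dist m x)^2 - 2 * t * dist m x * cos (angle \<gamma> (fst (logm m x)))"
proof -
  define d where "d = dist m x"
  define c where "c = cos (angle \<gamma> (fst (logm m x)))"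
  have "t * d * c \<le> t * d * 1" using assms unfolding d_def c_def by (intro mult_left_mono) auto
  moreover have "0 \<le> (t - d)^2" by simp
  ultimately have "0 \<le> t^2 + d^2 - 2 * (t * d * c)" by (simp add: power2_diff algebra_simps)
  then show ?thesis unfolding tdist_def tinner_def tnorm_def logm_def d_def c_def
    by (simp add: algebra_simps)
qed

lemma logm_geodesic_seg:
  assumes "unique_shortest m x"
  shows "geodesic_seg m x (fst (logm m x))"
proof -
  from assms obtain \<gamma> where "geodesic_seg m x \<gamma>" unfolding unique_shortest_def by blast
  then show ?thesis unfolding logm_def by (simp add: someI)
qed

lemma tnorm_nonneg: "W \<in> tangent_cone m \<Longrightarrow> 0 \<le> tnorm W"
  by (auto simp: tangent_cone_def tnorm_def)

lemma tdist_apex: "W \<in> tangent_cone m \<Longrightarrow> tdist W (apex m) = tnorm W"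
  using tnorm_nonneg[of W m] by (simp add: tdist_def tinner_def tnorm_def apex_def)

lemma tangent_frechet_zero_length: "tangent_frechet \<mu> m (\<gamma>, 0) = tangent_frechet \<mu> m (apex m)"
  by (simp add: tangent_frechet_def tdist_def tinner_def tnorm_def apex_def)

context
  fixes \<mu> :: "'a::metric_space measure"
  assumes prob: "prob_space \<mu>" and sets_eq: "sets \<mu> = sets borel" and fin: "finite_frechet \<mu>"
begin

lemma borel_measurable_dist [measurable]: "(\<lambda>x. dist c x) \<in> borel_measurable \<mu>"
  unfolding measurable_cong_sets[OF sets_eq refl]
  by (intro borel_measurable_continuous_onI continuous_intros)

lemma integrable_dist_sq: "integrable \<mu> (\<lambda>x. (dist c x)^2)"
  using fin unfolding finite_frechet_def by blast

lemma integrable_const_real: "integrable \<mu> (\<lambda>x. c::real)"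
  using prob by (simp add: prob_space.finite_measure finite_measure.integrable_const)

lemma integrable_dist: "integrable \<mu> (\<lambda>x. dist c x)"
proof (rule Bochner_Integration.integrable_bound)
  show "integrable \<mu> (\<lambda>x. (dist c x)^2 + 1)"
    using integrable_dist_sq integrable_const_real by simp
  have "dist c x \<le> (dist c x)^2 + 1" for x
    using zero_le_power2[of "dist c x - 1"]
    by (simp add: power2_eq_square algebra_simps) (use zero_le_dist[of c x] in linarith)
  then show "AE x in \<mu>. norm (dist c x) \<le> norm ((dist c x)^2 + 1)" by simp
qed simp

lemma tangent_frechet_apex: "tangent_frechet \<mu> m (apex m) = ennreal (frechet \<mu> m)"
proof -
  have "tangent_frechet \<mu> m (apex m) = (\<integral>\<^sup>+ x. ennreal ((dist m x)^2 / 2) \<partial>\<mu>)"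
    unfolding tangent_frechet_def tdist_def tinner_def tnorm_def apex_def logm_def by simp
  also have "\<dots> = ennreal (\<integral>x. (dist m x)^2 / 2 \<partial>\<mu>)"
    by (rule nn_integral_eq_integral) (use integrable_dist_sq in auto)
  finally show ?thesis unfolding frechet_def by simp
qed

lemma tangent_frechet_finite:
  assumes "W \<in> tangent_cone m"
  shows "tangent_frechet \<mu> m W < \<infinity>"
proof -
  obtain \<gamma> t where W: "W = (\<gamma>, t)" and t: "0 \<le> t"
    using assms unfolding tangent_cone_def by auto
  have "tangent_frechet \<mu> m (\<gamma>, t) \<le> (\<integral>\<^sup>+ x. ennreal (t^2 + (dist m x)^2) \<partial>\<mu>)"
    unfolding tangent_frechet_def
  proof (intro nn_integral_mono ennreal_leI)
    fix x
    define d where "d = dist m x"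
    define c where "c = cos (angle \<gamma> (fst (logm m x)))"
    have td: "0 \<le> t * d" using t unfolding d_def by simp
    then have "- (t * d) \<le> t * d * c"
      using mult_left_mono[of "-1" c "t * d"] unfolding c_def by simp
    moreover have "2 * (t * d) \<le> t^2 + d^2"
      using zero_le_power2[of "t - d"] unfolding power2_diff by linarith
    ultimately have "(t^2 + d^2 - 2 * t * d * c) / 2 \<le> t^2 + d^2"
      using td by (simp add: algebra_simps)
    then show "(tdist (\<gamma>, t) (logm m x))^2 / 2 \<le> t^2 + (dist m x)^2"
      unfolding tdist_logm_sq[OF t] d_def c_def .
  qed
  also have "\<dots> = ennreal (\<integral>x. t^2 + (dist m x)^2 \<partial>\<mu>)"
    by (rule nn_integral_eq_integral) (use integrable_dist_sq integrable_const_real in auto)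
  also have "\<dots> < \<infinity>" by simp
  finally show ?thesis unfolding W .
qed

lemma integrable_dist_sq_quotient: "integrable \<mu> (\<lambda>x. dist_sq_quotient \<gamma> l m x n)"
  unfolding dist_sq_quotient_def
  by (intro Bochner_Integration.integrable_divide Bochner_Integration.integrable_diff
      integrable_dist_sq)

lemma borel_measurable_dist_sq_quotient [measurable]:
  "(\<lambda>x. dist_sq_quotient \<gamma> l m x n) \<in> borel_measurable \<mu>"
  unfolding dist_sq_quotient_def by measurable

lemma integral_dist_sq_quotient_nonneg:
  assumes "frechet_mean \<mu> m" "0 < l"
  shows "0 \<le> (\<integral>x. dist_sq_quotient \<gamma> l m x n \<partial>\<mu>)"
proof -
  define s where "s = step_size l n"
  have s: "0 < s" using step_size_bounds[OF assms(2)] unfolding s_def by auto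
  have "frechet \<mu> m \<le> frechet \<mu> (\<gamma> s)" using assms(1) unfolding frechet_mean_def by blast
  then have "(\<integral>x. (dist m x)^2 \<partial>\<mu>) \<le> (\<integral>x. (dist (\<gamma> s) x)^2 \<partial>\<mu>)" unfolding frechet_def by simp
  moreover have "(\<integral>x. dist_sq_quotient \<gamma> l m x n \<partial>\<mu>)
      = ((\<integral>x. (dist (\<gamma> s) x)^2 \<partial>\<mu>) - (\<integral>x. (dist m x)^2 \<partial>\<mu>)) / (2 * s)"
    unfolding dist_sq_quotient_def s_def[symmetric] using integrable_dist_sq by simp
  ultimately show ?thesis using s by simp
qed

lemma nn_integral_liminf_shifted_quotient_le:
  assumes mean: "frechet_mean \<mu> m" and g: "geodesic_path l \<gamma>" "0 < l" "\<gamma> 0 = m"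
  shows "(\<integral>\<^sup>+ x. liminf (\<lambda>n. ennreal (dist m x + 1 - dist_sq_quotient \<gamma> l m x n)) \<partial>\<mu>)
    \<le> ennreal (\<integral>x. dist m x + 1 \<partial>\<mu>)"
proof -
  have "(\<integral>\<^sup>+ x. ennreal (dist m x + 1 - dist_sq_quotient \<gamma> l m x n) \<partial>\<mu>)
      \<le> ennreal (\<integral>x. dist m x + 1 \<partial>\<mu>)" for n
  proof -
    have "0 \<le> dist m x + 1 - dist_sq_quotient \<gamma> l m x n" for x
      using dist_sq_quotient_bounds[OF g(1,3,2), of x n] by linarith
    then have "(\<integral>\<^sup>+ x. ennreal (dist m x + 1 - dist_sq_quotient \<gamma> l m x n) \<partial>\<mu>)
        = ennreal (\<integral>x. dist m x + 1 - dist_sq_quotient \<gamma> l m x n \<partial>\<mu>)"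
      by (intro nn_integral_eq_integral)
        (use integrable_dist integrable_const_real integrable_dist_sq_quotient in auto)
    also have "(\<integral>x. dist m x + 1 - dist_sq_quotient \<gamma> l m x n \<partial>\<mu>)
        = (\<integral>x. dist m x + 1 \<partial>\<mu>) - (\<integral>x. dist_sq_quotient \<gamma> l m x n \<partial>\<mu>)"
      using integrable_dist integrable_const_real integrable_dist_sq_quotient by simp
    finally show ?thesis
      using integral_dist_sq_quotient_nonneg[OF mean g(2)] by (simp add: ennreal_leI)
  qed
  then have "liminf (\<lambda>n. \<integral>\<^sup>+ x. ennreal (dist m x + 1 - dist_sq_quotient \<gamma> l m x n) \<partial>\<mu>)
      \<le> ennreal (\<integral>x. dist m x + 1 \<partial>\<mu>)"
    by (intro Liminf_le) auto
  with nn_integral_liminf show ?thesis by (rule order_trans) measurable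
qed

text \<open>The angle term need not be measurable in \<open>x\<close>, so \<open>\<integral> d(m, x) cos \<angle>(\<gamma>, \<gamma>\<^sub>x) \<le> 0\<close> is
  stated through an integrable majorant.\<close>

lemma first_variation_integral_nonpos:
  fixes \<gamma> :: "real \<Rightarrow> 'a"
  assumes cat: "CAT \<kappa> TYPE('a)" and mean: "frechet_mean \<mu> m"
    and unique: "AE x in \<mu>. unique_shortest m x"
    and g: "geodesic_path l \<gamma>" "0 < l" "\<gamma> 0 = m"
  obtains h where "integrable \<mu> h" "(\<integral>x. h x \<partial>\<mu>) \<le> 0"
    "AE x in \<mu>. dist m x * cos (angle \<gamma> (fst (logm m x))) \<le> h x"
proof -
  define G where "G = (\<lambda>x. liminf (\<lambda>n. ennreal (dist m x + 1 - dist_sq_quotient \<gamma> l m x n)))"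
  have G_le: "G x \<le> ennreal (2 * dist m x + 2)" for x
  proof -
    have "ennreal (dist m x + 1 - dist_sq_quotient \<gamma> l m x n) \<le> ennreal (2 * dist m x + 2)" for n
      using dist_sq_quotient_bounds[OF g(1,3,2), of x n] by (intro ennreal_leI) simp
    then show ?thesis unfolding G_def by (intro Liminf_le) auto
  qed
  have G_fin: "G x < \<top>" for x using G_le[of x] ennreal_less_top by (rule order_le_less_trans)
  define h where "h = (\<lambda>x. enn2real (G x) - dist m x - 1)"
  have int_G: "integrable \<mu> (\<lambda>x. enn2real (G x))"
  proof (rule Bochner_Integration.integrable_bound)
    show "integrable \<mu> (\<lambda>x. 2 * dist m x + 2)" using integrable_dist integrable_const_real by simp
    show "(\<lambda>x. enn2real (G x)) \<in> borel_measurable \<mu>" unfolding G_def by measurable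
    show "AE x in \<mu>. norm (enn2real (G x)) \<le> norm (2 * dist m x + 2)"
      using G_le by (intro AE_I2) (simp add: enn2real_leI)
  qed
  show thesis
  proof
    show "integrable \<mu> h" unfolding h_def using int_G integrable_dist integrable_const_real by simp
    have "(\<integral>x. enn2real (G x) \<partial>\<mu>) = enn2real (\<integral>\<^sup>+ x. ennreal (enn2real (G x)) \<partial>\<mu>)"
      by (rule integral_eq_nn_integral) (use int_G in auto)
    also have "\<dots> = enn2real (\<integral>\<^sup>+ x. G x \<partial>\<mu>)" using G_fin by simp
    also have "\<dots> \<le> (\<integral>x. dist m x + 1 \<partial>\<mu>)"
      using nn_integral_liminf_shifted_quotient_le[OF mean g] unfolding G_def[symmetric]
      by (intro enn2real_leI) (auto intro!: integral_nonneg_AE)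
    finally show "(\<integral>x. h x \<partial>\<mu>) \<le> 0"
      unfolding h_def using int_G integrable_dist integrable_const_real by simp
    show "AE x in \<mu>. dist m x * cos (angle \<gamma> (fst (logm m x))) \<le> h x"
      using unique
    proof eventually_elim
      case (elim x)
      then have "ennreal (dist m x + 1 + dist m x * cos (angle \<gamma> (fst (logm m x)))) \<le> G x"
        unfolding G_def by (intro liminf_dist_sq_quotient_ge[OF cat g] logm_geodesic_seg)
      from enn2real_mono[OF this G_fin]
      have "dist m x + 1 + dist m x * cos (angle \<gamma> (fst (logm m x))) \<le> enn2real (G x)"
        using mult_left_mono[of "-1" "cos (angle \<gamma> (fst (logm m x)))" "dist m x"] by simp
      then show ?case unfolding h_def by linarith
    qed
  qed
qed

lemma tangent_frechet_ge:
  assumes cat: "CAT \<kappa> TYPE('a)" and mean: "frechet_mean \<mu> m"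
    and unique: "AE x in \<mu>. unique_shortest m x" and W: "W \<in> tangent_cone m"
  shows "ennreal (frechet \<mu> m + (tnorm W)^2 / 2) \<le> tangent_frechet \<mu> m W"
proof -
  obtain \<gamma> t where W_eq: "W = (\<gamma>, t)" by (cases W)
  from W consider "t = 0" | "0 < t" "\<gamma> \<in> geodesics_from m"
    unfolding W_eq tangent_cone_def by auto
  then show ?thesis
  proof cases
    case 1
    then show ?thesis
      unfolding W_eq by (simp add: tnorm_def tangent_frechet_zero_length tangent_frechet_apex)
  next
    case 2
    then obtain l where g: "geodesic_path l \<gamma>" "0 < l" "\<gamma> 0 = m"
      unfolding geodesics_from_def by blast
    obtain h where h: "integrable \<mu> h" "(\<integral>x. h x \<partial>\<mu>) \<le> 0"
      "AE x in \<mu>. dist m x * cos (angle \<gamma> (fst (logm m x))) \<le> h x"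
      using first_variation_integral_nonpos[OF cat mean unique g] by blast
    define J where "J = (\<lambda>x. (t^2 + (dist m x)^2) / 2 - t * h x)"
    have int_J: "integrable \<mu> J"
      unfolding J_def using integrable_dist_sq integrable_const_real h(1) by simp
    have "(\<integral>x. J x \<partial>\<mu>) = t^2 / 2 + frechet \<mu> m - t * (\<integral>x. h x \<partial>\<mu>)"
      unfolding J_def frechet_def using integrable_dist_sq integrable_const_real h(1)
        prob_space.prob_space[OF prob]
      by (simp add: add_divide_distrib)
    moreover have "t * (\<integral>x. h x \<partial>\<mu>) \<le> 0" using h(2) 2(1) by (simp add: mult_nonneg_nonpos)
    ultimately have "frechet \<mu> m + t^2 / 2 \<le> (\<integral>x. J x \<partial>\<mu>)" by simp
    moreover have "AE x in \<mu>. J x \<le> (tdist (\<gamma>, t) (logm m x))^2 / 2"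
      using h(3)
    proof eventually_elim
      case (elim x)
      then have "t * (dist m x * cos (angle \<gamma> (fst (logm m x)))) \<le> t * h x"
        using 2(1) by (intro mult_left_mono) auto
      then show ?case
        unfolding J_def tdist_logm_sq[OF less_imp_le[OF 2(1)]] by (simp add: field_simps)
    qed
    from ennreal_integral_le_nn_integral[OF int_J this]
    have "ennreal (\<integral>x. J x \<partial>\<mu>) \<le> tangent_frechet \<mu> m W"
      unfolding tangent_frechet_def W_eq .
    ultimately show ?thesis unfolding W_eq by (simp add: tnorm_def order_trans[OF ennreal_leI])
  qed
qed

end

theorem lemmal:
  fixes \<mu> :: "'a::metric_space measure" and \<kappa> :: real and m :: 'a
  assumes "CAT \<kappa> TYPE('a)"
    and "prob_space \<mu>" and "sets \<mu> = sets borel"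
    and "localized \<mu> m"
  shows "tangent_frechet_mean \<mu> m (apex m)"
proof -
  have fin: "finite_frechet \<mu>" and mean: "frechet_mean \<mu> m"
    and unique: "AE x in \<mu>. unique_shortest m x"
    using assms(4) unfolding localized_def by auto
  note apex_eq = tangent_frechet_apex[OF assms(2,3) fin]
  note lower = tangent_frechet_ge[OF assms(2,3) fin assms(1) mean unique]
  show ?thesis
    unfolding tangent_frechet_mean_def
  proof (intro conjI ballI impI)
    show "apex m \<in> tangent_cone m" by (simp add: apex_def tangent_cone_def)
  next
    fix W assume "W \<in> tangent_cone m"
    then show "tangent_frechet \<mu> m W < \<infinity>" by (rule tangent_frechet_finite[OF assms(2,3) fin])
  next
    fix W assume W: "W \<in> tangent_cone m"
    show "tangent_frechet \<mu> m (apex m) \<le> tangent_frechet \<mu> m W"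
      using lower[OF W] unfolding apex_eq by (rule order_trans[rotated]) (simp add: ennreal_leI)
    assume "tangent_frechet \<mu> m W \<le> tangent_frechet \<mu> m (apex m)"
    with lower[OF W] have "ennreal (frechet \<mu> m + (tnorm W)^2 / 2) \<le> ennreal (frechet \<mu> m)"
      unfolding apex_eq by (rule order_trans)
    then have "frechet \<mu> m + (tnorm W)^2 / 2 \<le> frechet \<mu> m"
      using ennreal_le_iff[OF frechet_nonneg] by blast
    then show "tdist W (apex m) = 0" using tdist_apex[OF W] by simp
  qed
qed

end
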